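(* Let $\alpha=(\alpha_1,\dots,\alpha_\ell)\models n$. Then $\mathbb F[\mathcal{OP}_\alpha]$ is a cyclic $H_n(0)$-module generated by the ordered set partition $(12\cdots n,\alpha)$, and the linear map sending $(w,\alpha)\mapsto\overline\pi_w\pi_{w_0(\alpha^c)}$ for all $w\in\mathfrak S_n$ with $\mathrm{Des}(w)\subseteq\mathrm{Des}(\alpha)$ is an isomorphism of $H_n(0)$-modules $\mathbb F[\mathcal{OP}_\alpha]\cong P_{(n),\alpha}=H_n(0)\pi_{w_0(\alpha^c)}$.
   Context: $H_n(0)$ is the 0-Hecke algebra over a field $\mathbb F$ with generators $\pi_1,\dots,\pi_{n-1}$ (relations $\pi_i^2=\pi_i$, far commutation, braid relations); $\overline\pi_i=\pi_i-1$; for a reduced expression $w=s_{i_1}\cdots s_{i_\ell}$, $\pi_w=\pi_{i_1}\cdots\pi_{i_\ell}$, $\overline\pi_w=\overline\pi_{i_1}\cdots\overline\pi_{i_\ell}$. For a composition $\alpha\models n$, $\mathrm{Des}(\alpha)$ is its set of partial sums (excluding $n$), $\alpha^c$ is the composition with $\mathrm{Des}(\alpha^c)=[n-1]\setminus\mathrm{Des}(\alpha)$, and $w_0(\alpha)$ is the minimal-length permutation with descent set $\mathrm{Des}(\alpha)$ (so $w_0(\alpha^c)$ is the minimal-length permutation with descent set $[n-1]\setminus \mathrm{Des}(\alpha)$). For compositions $\gamma\preceq\beta$ (i.e. $\mathrm{Des}(\gamma)\subseteq\mathrm{Des}(\beta)$), $P_{\gamma,\beta}=H_n(0)\overline\pi_{w_0(\gamma)}\pi_{w_0(\beta^c)}$;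 $(n)$ is the one-part composition. An ordered set partition $\sigma=(B_1\mid\cdots\mid B_k)$ of $[n]$ is identified with $(w,\alpha)$, $\alpha=(|B_1|,\dots,|B_k|)$ its shape and $w$ the permutation listing $B_1,\dots,B_k$ each increasingly; $\mathcal{OP}_\alpha$ is the set of ordered set partitions of shape $\alpha$ (equivalently $w$ with $\mathrm{Des}(w)\subseteq\mathrm{Des}(\alpha)$). $H_n(0)$ acts on $\mathbb F[\mathcal{OP}_\alpha]$ by: $\pi_i.\sigma=0$ if $i+1$ lies in a block to the left of $i$; $\pi_i.\sigma=\sigma+s_i(\sigma)$ if $i+1$ lies in a block to the right of $i$; $\pi_i.\sigma=\sigma$ if $i,i+1$ are in the same block; here $s_i(\sigma)$ swaps the letters $i$ and $i+1$. *)

theory Defs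
  imports "HOL-Combinatorics.Combinatorics"
begin

text \<open>Permutations of [n] are functions nat => nat permuting {1..n}, written
  in one-line notation w(1) ... w(n); composition is function composition.\<close>

type_synonym perm = "nat \<Rightarrow> nat"

definition Sn :: "nat \<Rightarrow> perm set" where
  "Sn n = {w. w permutes {1..n}}"

definition sref :: "nat \<Rightarrow> perm" where
  "sref i = transpose i (Suc i)"

definition perm_len :: "nat \<Rightarrow> perm \<Rightarrow> nat" where
  "perm_len n w = card {(i, j). 1 \<le> i \<and> i < j \<and> j \<le> n \<and> w j < w i}"

definition pdes :: "nat \<Rightarrow> perm \<Rightarrow> nat set" where
  "pdes n w = {i. 1 \<le> i \<and> i < n \<and> w (Suc i) < w i}"

definition is_composition :: "nat \<Rightarrow> nat list \<Rightarrow> bool" where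
  "is_composition n \<alpha> \<longleftrightarrow> (\<forall>x\<in>set \<alpha>. 0 < x) \<and> sum_list \<alpha> = n"

definition cdes :: "nat list \<Rightarrow> nat set" where
  "cdes \<alpha> = {sum_list (take k \<alpha>) | k. 1 \<le> k \<and> k < length \<alpha>}"

text \<open>words and reduced expressions: [i1,...,il] represents s_i1 ... s_il\<close>
definition word_perm :: "nat list \<Rightarrow> perm" where
  "word_perm ws = foldr (\<lambda>i w. sref i \<circ> w) ws id"

definition reduced_word :: "nat \<Rightarrow> perm \<Rightarrow> nat list \<Rightarrow> bool" where
  "reduced_word n w ws \<longleftrightarrow> set ws \<subseteq> {1..<n} \<and> word_perm ws = w \<and> length ws = perm_len n w"

definition rw :: "nat \<Rightarrow> perm \<Rightarrow> nat list" where
  "rw n w = (SOME ws. reduced_word n w ws)"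

definition min_des_perm :: "nat \<Rightarrow> nat set \<Rightarrow> perm" where
  "min_des_perm n D = (SOME w. w \<in> Sn n \<and> pdes n w = D \<and>
      (\<forall>u\<in>Sn n. pdes n u = D \<longrightarrow> perm_len n w \<le> perm_len n u))"

text \<open>w0(alpha) and w0(alpha^c), where Des(alpha^c) = [n-1] - Des(alpha)\<close>
definition w0 :: "nat \<Rightarrow> nat list \<Rightarrow> perm" where
  "w0 n \<alpha> = min_des_perm n (cdes \<alpha>)"

definition w0c :: "nat \<Rightarrow> nat list \<Rightarrow> perm" where
  "w0c n \<alpha> = min_des_perm n ({1..<n} - cdes \<alpha>)"

text \<open>Elements are coefficient functions S_n -> F (zero outside S_n).\<close>
definition Hn :: "nat \<Rightarrow> (perm \<Rightarrow> 'a::field) set" where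
  "Hn n = {x. \<forall>w. w \<notin> Sn n \<longrightarrow> x w = 0}"

definition hb :: "perm \<Rightarrow> perm \<Rightarrow> 'a::field" where
  "hb w = (\<lambda>u. if u = w then 1 else 0)"

text \<open>pi_i pi_w = pi_(s_i w) if l(s_i w) > l(w), and = pi_w otherwise\<close>
definition gen_basis :: "nat \<Rightarrow> nat \<Rightarrow> perm \<Rightarrow> perm \<Rightarrow> 'a::field" where
  "gen_basis n i w = (if perm_len n w < perm_len n (sref i \<circ> w) then hb (sref i \<circ> w) else hb w)"

definition hgen :: "nat \<Rightarrow> nat \<Rightarrow> (perm \<Rightarrow> 'a::field) \<Rightarrow> (perm \<Rightarrow> 'a)" where
  "hgen n i x = (\<lambda>u. \<Sum>w\<in>Sn n. x w * gen_basis n i w u)"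

definition wact :: "(nat \<Rightarrow> 'v \<Rightarrow> 'v) \<Rightarrow> nat list \<Rightarrow> 'v \<Rightarrow> 'v" where
  "wact g ws v = foldr g ws v"

definition bar :: "(nat \<Rightarrow> (perm \<Rightarrow> 'a::field) \<Rightarrow> (perm \<Rightarrow> 'a)) \<Rightarrow> nat \<Rightarrow> (perm \<Rightarrow> 'a) \<Rightarrow> (perm \<Rightarrow> 'a)" where
  "bar g i v = (\<lambda>u. g i v u - v u)"

text \<open>action of an arbitrary element h = sum_w h(w) pi_w of H_n(0) on a module whose
  generator action is g (both modules here have vectors perm => F)\<close>
definition hact :: "nat \<Rightarrow> (nat \<Rightarrow> (perm \<Rightarrow> 'a::field) \<Rightarrow> (perm \<Rightarrow> 'a)) \<Rightarrow> (perm \<Rightarrow> 'a) \<Rightarrow> (perm \<Rightarrow> 'a) \<Rightarrow> (perm \<Rightarrow> 'a)" where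
  "hact n g h v = (\<lambda>u. \<Sum>w\<in>Sn n. h w * wact g (rw n w) v u)"

definition hmul :: "nat \<Rightarrow> (perm \<Rightarrow> 'a::field) \<Rightarrow> (perm \<Rightarrow> 'a) \<Rightarrow> (perm \<Rightarrow> 'a)" where
  "hmul n x y = hact n (hgen n) x y"

definition pi_w :: "nat \<Rightarrow> perm \<Rightarrow> perm \<Rightarrow> 'a::field" where
  "pi_w n w = wact (hgen n) (rw n w) (hb id)"

definition pibar_w :: "nat \<Rightarrow> perm \<Rightarrow> perm \<Rightarrow> 'a::field" where
  "pibar_w n w = wact (bar (hgen n)) (rw n w) (hb id)"

definition Pmod :: "nat \<Rightarrow> nat list \<Rightarrow> nat list \<Rightarrow> (perm \<Rightarrow> 'a::field) set" where
  "Pmod n \<gamma> \<beta> = {hmul n h (hmul n (pibar_w n (w0 n \<gamma>)) (pi_w n (w0c n \<beta>))) | h. h \<in> Hn n}"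

text \<open>(w, alpha) with Des(w) subset Des(alpha)\<close>
definition OP :: "nat \<Rightarrow> nat list \<Rightarrow> perm set" where
  "OP n \<alpha> = {w \<in> Sn n. pdes n w \<subseteq> cdes \<alpha>}"

text \<open>index (0-based, left to right) of the block of (w, alpha) containing letter x\<close>
definition blk :: "nat list \<Rightarrow> perm \<Rightarrow> nat \<Rightarrow> nat" where
  "blk \<alpha> w x = card {d \<in> cdes \<alpha>. d < inv w x}"

definition op_basis :: "nat list \<Rightarrow> nat \<Rightarrow> perm \<Rightarrow> perm \<Rightarrow> 'a::field" where
  "op_basis \<alpha> i w =
     (if blk \<alpha> w (Suc i) < blk \<alpha> w i then (\<lambda>_. 0)
      else if blk \<alpha> w i < blk \<alpha> w (Suc i) then (\<lambda>u. hb w u + hb (sref i \<circ> w) u)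
      else hb w)"

definition opgen :: "nat \<Rightarrow> nat list \<Rightarrow> nat \<Rightarrow> (perm \<Rightarrow> 'a::field) \<Rightarrow> (perm \<Rightarrow> 'a)" where
  "opgen n \<alpha> i v = (\<lambda>u. \<Sum>w\<in>OP n \<alpha>. v w * op_basis \<alpha> i w u)"

definition FOP :: "nat \<Rightarrow> nat list \<Rightarrow> (perm \<Rightarrow> 'a::field) set" where
  "FOP n \<alpha> = {v. \<forall>w. w \<notin> OP n \<alpha> \<longrightarrow> v w = 0}"

end

theory Submission
  imports Defs
begin

text \<open>Write \<open>\<pi>'\<^sub>i = \<pi>\<^sub>i - 1\<close> and \<open>z = w\<^sub>0(\<alpha>\<^sup>c)\<close>, the permutation reversing every block of \<open>\<alpha>\<close>.
  The map \<open>(w, \<alpha>) \<mapsto> \<pi>'\<^sub>w \<pi>\<^sub>z\<close> intertwines the two actions because left multiplication by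
  \<open>\<pi>\<^sub>i\<close> reproduces the three cases of the action on ordered set partitions: if \<open>i + 1\<close> stands
  left of \<open>i\<close> in \<open>w\<close>, then \<open>\<pi>'\<^sub>w = \<pi>'\<^sub>i \<pi>'\<^bsub>s\<^sub>i w\<^esub>\<close> and \<open>\<pi>\<^sub>i \<pi>'\<^sub>i = 0\<close>; if \<open>i\<close> stands left of \<open>i + 1\<close>
  in different blocks, \<open>\<pi>\<^sub>i \<pi>'\<^sub>w = \<pi>'\<^bsub>s\<^sub>i w\<^esub> + \<pi>'\<^sub>w\<close>; if they lie in a common block, they are
  adjacent in \<open>w\<close>, so \<open>s\<^sub>i w = w s\<^sub>a\<close> with \<open>a, a + 1\<close> in a common block of \<open>z\<close>, and \<open>\<pi>'\<^sub>a \<pi>\<^sub>z = 0\<close>.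
  Expanding \<open>\<pi>'\<^sub>w \<pi>\<^sub>z\<close>, its only term of maximal length is \<open>\<pi>\<^bsub>w z\<^esub>\<close>, and
  \<open>\<ell>(w z) = \<ell>(w) + \<ell>(z)\<close>; comparing leading terms shows that the images of the basis are
  linearly independent. Since \<open>(id, \<alpha>) \<mapsto> \<pi>\<^sub>z\<close>, the image is \<open>H\<^sub>n(0) \<pi>\<^sub>z = P\<^bsub>(n),\<alpha>\<^esub>\<close>, and
  injectivity shows that \<open>(id, \<alpha>)\<close> generates \<open>\<bbbF>[OP\<^sub>\<alpha>]\<close>.\<close>

lemma sref_apply: "sref i x = (if x = i then Suc i else if x = Suc i then i else x)"
  by (simp add: sref_def transpose_def)

lemma sref_comp_sref [simp]: "sref i \<circ> (sref i \<circ> w) = w"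
  by (auto simp: fun_eq_iff sref_apply)

lemma sref_less_sref_iff:
  "sref i y < sref i x \<longleftrightarrow> (y < x \<and> \<not> (y = i \<and> x = Suc i)) \<or> (y = Suc i \<and> x = i)"
  by (auto simp: sref_apply)

lemma sref_commute: "Suc i < j \<Longrightarrow> sref j \<circ> (sref i \<circ> u) = sref i \<circ> (sref j \<circ> u)"
  by (auto simp: fun_eq_iff sref_apply)

lemma sref_braid:
  "sref (Suc i) \<circ> (sref i \<circ> (sref (Suc i) \<circ> u)) = sref i \<circ> (sref (Suc i) \<circ> (sref i \<circ> u))"
  by (auto simp: fun_eq_iff sref_apply)

lemma bij_sref_comp: "bij w \<Longrightarrow> bij (sref i \<circ> w)"
  by (simp add: sref_def bij_comp)

lemma inv_sref_comp: "bij w \<Longrightarrow> inv (sref i \<circ> w) x = inv w (sref i x)"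
  by (simp add: sref_def o_inv_distrib)

lemma sref_comp_Sn: "w \<in> Sn n \<Longrightarrow> 1 \<le> i \<Longrightarrow> i < n \<Longrightarrow> sref i \<circ> w \<in> Sn n"
  unfolding Sn_def sref_def by (auto intro: permutes_compose[OF _ permutes_swap_id])

lemma id_Sn [simp]: "id \<in> Sn n"
  by (simp add: Sn_def)

lemma inv_Sn: "w \<in> Sn n \<Longrightarrow> inv w \<in> Sn n"
  unfolding Sn_def using permutes_inv by blast

lemma finite_Sn: "finite (Sn n)"
  unfolding Sn_def by (rule finite_permutations) simp

lemma bij_Sn: "w \<in> Sn n \<Longrightarrow> bij w"
  unfolding Sn_def using permutes_bij by blast

lemma Sn_in_range: "w \<in> Sn n \<Longrightarrow> x \<in> {1..n} \<Longrightarrow> w x \<in> {1..n}"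
  unfolding Sn_def by (blast intro: permutes_in_image[THEN iffD2])

lemma Sn_fixes: "w \<in> Sn n \<Longrightarrow> x \<notin> {1..n} \<Longrightarrow> w x = x"
  by (simp add: Sn_def permutes_not_in)

lemma Sn_apply_inv: "w \<in> Sn n \<Longrightarrow> w (inv w x) = x"
  by (simp add: Sn_def permutes_inverses)

lemma Sn_inv_apply: "w \<in> Sn n \<Longrightarrow> inv w (w x) = x"
  by (simp add: Sn_def permutes_inverses)

lemma Sn_eq_iff: "w \<in> Sn n \<Longrightarrow> w x = w y \<longleftrightarrow> x = y"
  by (metis Sn_inv_apply)

lemma inv_Sn_in_range: "w \<in> Sn n \<Longrightarrow> x \<in> {1..n} \<Longrightarrow> inv w x \<in> {1..n}"
  using Sn_in_range[OF inv_Sn] .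

lemma card_Sn_le_value:
  assumes u: "u \<in> Sn n" and p: "p \<in> {1..n}"
  shows "card {q\<in>{1..n}. u q \<le> u p} = u p"
proof -
  have "bij_betw u {q\<in>{1..n}. u q \<le> u p} {1..u p}"
  proof (rule bij_betw_imageI)
    show "inj_on u {q\<in>{1..n}. u q \<le> u p}"
      using Sn_eq_iff[OF u] by (auto simp: inj_on_def)
    show "u ` {q\<in>{1..n}. u q \<le> u p} = {1..u p}"
    proof
      show "u ` {q\<in>{1..n}. u q \<le> u p} \<subseteq> {1..u p}"
        using Sn_in_range[OF u] by fastforce
      show "{1..u p} \<subseteq> u ` {q\<in>{1..n}. u q \<le> u p}"
      proof
        fix y assume y: "y \<in> {1..u p}"
        then have "y \<in> {1..n}" using Sn_in_range[OF u p] by auto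
        then show "y \<in> u ` {q\<in>{1..n}. u q \<le> u p}"
          using y inv_Sn_in_range[OF u] Sn_apply_inv[OF u] by (intro image_eqI[of y u "inv u y"]) auto
      qed
    qed
  qed
  then show ?thesis by (simp add: bij_betw_same_card)
qed

lemma Sn_eqI_relative_order:
  assumes u: "u \<in> Sn n" and z: "z \<in> Sn n"
    and order: "\<And>p q. p \<in> {1..n} \<Longrightarrow> q \<in> {1..n} \<Longrightarrow> u q \<le> u p \<longleftrightarrow> z q \<le> z p"
  shows "u = z"
proof
  fix p
  show "u p = z p"
  proof (cases "p \<in> {1..n}")
    case True
    then have "{q\<in>{1..n}. u q \<le> u p} = {q\<in>{1..n}. z q \<le> z p}" using order by auto
    then show ?thesis using card_Sn_le_value[OF u True] card_Sn_le_value[OF z True] by simp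
  qed (simp add: Sn_fixes[OF u] Sn_fixes[OF z])
qed

lemma Sn_ascending_eq_id:
  assumes w: "w \<in> Sn n" and asc: "\<And>i. 1 \<le> i \<Longrightarrow> i < n \<Longrightarrow> w i < w (Suc i)"
  shows "w = id"
proof (rule Sn_eqI_relative_order[OF w id_Sn])
  have mono: "w p < w q" if "1 \<le> p" "p < q" "q \<le> n" for p q
    by (rule lift_Suc_mono_less_ivl[where N = "{1..<n}"]) (use that asc in auto)
  fix p q assume "p \<in> {1..n}" "q \<in> {1..n}"
  then show "w q \<le> w p \<longleftrightarrow> id q \<le> id p"
    using mono[of p q] mono[of q p] by (cases "q < p"; cases "q = p") auto
qed

section \<open>Inversions and length\<close>

definition inversions :: "nat \<Rightarrow> perm \<Rightarrow> (nat \<times> nat) set" where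
  "inversions n w = {(i, j). 1 \<le> i \<and> i < j \<and> j \<le> n \<and> w j < w i}"

lemma perm_len_eq_card_inversions: "perm_len n w = card (inversions n w)"
  by (simp add: perm_len_def inversions_def)

lemma finite_inversions [simp]: "finite (inversions n w)"
  by (rule finite_subset[of _ "{1..n} \<times> {1..n}"]) (auto simp: inversions_def)

lemma Sn_eqI_inversions:
  assumes u: "u \<in> Sn n" and z: "z \<in> Sn n" and inv_eq: "inversions n u = inversions n z"
  shows "u = z"
proof (rule Sn_eqI_relative_order[OF u z])
  have le_iff: "w q \<le> w p \<longleftrightarrow>
      q = p \<or> (p < q \<and> (p, q) \<in> inversions n w) \<or> (q < p \<and> (q, p) \<notin> inversions n w)"
    if "w \<in> Sn n" "p \<in> {1..n}" "q \<in> {1..n}" for w p q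
    using that Sn_eq_iff[OF that(1), of p q] by (auto simp: inversions_def)
  fix p q assume "p \<in> {1..n}" "q \<in> {1..n}"
  then show "u q \<le> u p \<longleftrightarrow> z q \<le> z p"
    using le_iff[OF u] le_iff[OF z] inv_eq by simp
qed

lemma inversions_id [simp]: "inversions n id = {}"
  by (auto simp: inversions_def)

lemma perm_len_id [simp]: "perm_len n id = 0"
  by (simp add: perm_len_eq_card_inversions)

lemma perm_len_eq_0_imp_id:
  assumes w: "w \<in> Sn n" and "perm_len n w = 0"
  shows "w = id"
proof (rule Sn_ascending_eq_id[OF w])
  fix i assume "1 \<le> i" "i < n"
  moreover have "inversions n w = {}" using assms(2) by (simp add: perm_len_eq_card_inversions)
  ultimately show "w i < w (Suc i)"
    using Sn_eq_iff[OF w, of i "Suc i"] by (fastforce simp: inversions_def)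
qed

lemma inversions_sref_ascent:
  assumes w: "w \<in> Sn n" and i: "1 \<le> i" "i < n" and asc: "inv w i < inv w (Suc i)"
  shows "inversions n (sref i \<circ> w) = insert (inv w i, inv w (Suc i)) (inversions n w)"
    and "(inv w i, inv w (Suc i)) \<notin> inversions n w"
proof -
  let ?a = "inv w i" and ?b = "inv w (Suc i)"
  have wa: "w ?a = i" and wb: "w ?b = Suc i" using Sn_apply_inv[OF w] by auto
  have ab: "?a \<in> {1..n}" "?b \<in> {1..n}" using i inv_Sn_in_range[OF w] by auto
  show "inversions n (sref i \<circ> w) = insert (?a, ?b) (inversions n w)"
  proof (rule set_eqI, clarify)
    fix p q
    have "w p = i \<longleftrightarrow> p = ?a" "w q = Suc i \<longleftrightarrow> q = ?b"
      "w p = Suc i \<longleftrightarrow> p = ?b" "w q = i \<longleftrightarrow> q = ?a"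
      using Sn_eq_iff[OF w] wa wb by metis+
    then show "(p, q) \<in> inversions n (sref i \<circ> w) \<longleftrightarrow> (p, q) \<in> insert (?a, ?b) (inversions n w)"
      unfolding inversions_def o_def sref_less_sref_iff using ab asc by auto
  qed
  show "(?a, ?b) \<notin> inversions n w" using wa wb by (simp add: inversions_def)
qed

lemma perm_len_sref_ascent:
  assumes "w \<in> Sn n" "1 \<le> i" "i < n" "inv w i < inv w (Suc i)"
  shows "perm_len n (sref i \<circ> w) = Suc (perm_len n w)"
  using inversions_sref_ascent[OF assms] by (simp add: perm_len_eq_card_inversions)

lemma perm_len_sref_descent:
  assumes w: "w \<in> Sn n" and i: "1 \<le> i" "i < n" and desc: "inv w (Suc i) < inv w i"
  shows "perm_len n w = Suc (perm_len n (sref i \<circ> w))"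
proof -
  have "inv (sref i \<circ> w) i < inv (sref i \<circ> w) (Suc i)"
    using desc by (simp add: inv_sref_comp[OF bij_Sn[OF w]] sref_apply)
  from perm_len_sref_ascent[OF sref_comp_Sn[OF w i] i this] show ?thesis by simp
qed

lemma inv_Sn_neq: "w \<in> Sn n \<Longrightarrow> x \<noteq> y \<Longrightarrow> inv w x \<noteq> inv w y"
  by (metis Sn_apply_inv)

lemma perm_len_sref_cases:
  assumes w: "w \<in> Sn n" and i: "1 \<le> i" "i < n"
  obtains "inv w i < inv w (Suc i)" "perm_len n (sref i \<circ> w) = Suc (perm_len n w)"
    | "inv w (Suc i) < inv w i" "perm_len n w = Suc (perm_len n (sref i \<circ> w))"
  using perm_len_sref_ascent[OF assms] perm_len_sref_descent[OF assms] inv_Sn_neq[OF w, of i "Suc i"]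
  by (metis linorder_neqE_nat n_not_Suc_n)

lemma exists_left_descent:
  assumes u: "u \<in> Sn n" and "u \<noteq> id"
  obtains i where "1 \<le> i" "i < n" "inv u (Suc i) < inv u i"
proof -
  have "inv u \<noteq> id" using assms(2) by (metis bij_Sn[OF u] inv_id inv_inv_eq)
  then obtain i where "1 \<le> i" "i < n" "\<not> inv u i < inv u (Suc i)"
    using Sn_ascending_eq_id[OF inv_Sn[OF u]] by blast
  then show ?thesis using that inv_Sn_neq[OF u, of i "Suc i"] by simp
qed

section \<open>Reduced words\<close>

lemma word_perm_Nil [simp]: "word_perm [] = id"
  by (simp add: word_perm_def)

lemma word_perm_Cons [simp]: "word_perm (i # ws) = sref i \<circ> word_perm ws"
  by (simp add: word_perm_def)

lemma word_perm_append: "word_perm (xs @ ys) = word_perm xs \<circ> word_perm ys"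
  by (induction xs) auto

lemma word_perm_Sn: "set ws \<subseteq> {1..<n} \<Longrightarrow> word_perm ws \<in> Sn n"
  by (induction ws) (auto intro: sref_comp_Sn)

lemma perm_len_word_perm_le: "set ws \<subseteq> {1..<n} \<Longrightarrow> perm_len n (word_perm ws) \<le> length ws"
proof (induction ws)
  case (Cons i ws)
  then have IH: "perm_len n (word_perm ws) \<le> length ws" and i: "1 \<le> i" "i < n"
    by auto
  have "word_perm ws \<in> Sn n" using Cons.prems word_perm_Sn by auto
  from this i show ?case
  proof (cases rule: perm_len_sref_cases)
    case 1
    then show ?thesis using IH by (simp del: comp_apply)
  next
    case 2
    then show ?thesis using IH by (simp del: comp_apply)
  qed
qed simp

lemma reduced_word_length: "reduced_word n u ws \<Longrightarrow> length ws = perm_len n u"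
  by (simp add: reduced_word_def)

lemma reduced_word_set: "reduced_word n u ws \<Longrightarrow> set ws \<subseteq> {1..<n}"
  by (simp add: reduced_word_def)

lemma reduced_word_Sn: "reduced_word n u ws \<Longrightarrow> u \<in> Sn n"
  by (metis reduced_word_def word_perm_Sn)

lemma reduced_word_ConsD:
  assumes "reduced_word n u (i # ws)"
  shows "reduced_word n (sref i \<circ> u) ws" "inv u (Suc i) < inv u i" "1 \<le> i" "i < n"
proof -
  let ?x = "word_perm ws"
  have s: "set ws \<subseteq> {1..<n}" and i: "1 \<le> i" "i < n" and u: "u = sref i \<circ> ?x"
    and l: "Suc (length ws) = perm_len n u"
    using assms by (auto simp: reduced_word_def)
  have x: "?x \<in> Sn n" using word_perm_Sn[OF s] .
  from x i have asc: "inv ?x i < inv ?x (Suc i)" and lx: "perm_len n ?x = length ws"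
    using perm_len_word_perm_le[OF s] l u by (cases rule: perm_len_sref_cases; simp)+
  show "reduced_word n (sref i \<circ> u) ws" using s lx u by (simp add: reduced_word_def)
  show "inv u (Suc i) < inv u i" using asc u by (simp add: inv_sref_comp[OF bij_Sn[OF x]] sref_apply)
  show "1 \<le> i" "i < n" by fact+
qed

lemma reduced_word_ascentI:
  assumes "reduced_word n x ws" "1 \<le> i" "i < n" "inv x i < inv x (Suc i)"
  shows "reduced_word n (sref i \<circ> x) (i # ws)"
  using assms perm_len_sref_ascent[OF reduced_word_Sn[OF assms(1)]]
  by (auto simp: reduced_word_def)

lemma reduced_word_descentI:
  assumes "reduced_word n (sref i \<circ> u) ws" "inv u (Suc i) < inv u i" "1 \<le> i" "i < n" "u \<in> Sn n"
  shows "reduced_word n u (i # ws)"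
proof -
  have "inv (sref i \<circ> u) i < inv (sref i \<circ> u) (Suc i)"
    using assms(2) by (simp add: inv_sref_comp[OF bij_Sn[OF assms(5)]] sref_apply)
  from reduced_word_ascentI[OF assms(1) assms(3,4) this] show ?thesis by simp
qed

lemma reduced_word_exists: "u \<in> Sn n \<Longrightarrow> \<exists>ws. reduced_word n u ws"
proof (induction "perm_len n u" arbitrary: u rule: less_induct)
  case less
  show ?case
  proof (cases "u = id")
    case True
    then show ?thesis by (intro exI[of _ "[]"]) (simp add: reduced_word_def)
  next
    case False
    then obtain i where i: "1 \<le> i" "i < n" "inv u (Suc i) < inv u i"
      using exists_left_descent[OF less.prems] by blast
    have "perm_len n u = Suc (perm_len n (sref i \<circ> u))"
      using perm_len_sref_descent[OF less.prems i] .
    then obtain ws where "reduced_word n (sref i \<circ> u) ws"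
      using less.hyps sref_comp_Sn[OF less.prems i(1,2)] by auto
    then show ?thesis using reduced_word_descentI i less.prems by blast
  qed
qed

lemma rw_reduced_word: "u \<in> Sn n \<Longrightarrow> reduced_word n u (rw n u)"
  unfolding rw_def using reduced_word_exists someI_ex by metis

lemma rw_set: "u \<in> Sn n \<Longrightarrow> set (rw n u) \<subseteq> {1..<n}"
  using reduced_word_set rw_reduced_word by blast

lemma perm_len_comp_le:
  assumes "w \<in> Sn n" "u \<in> Sn n"
  shows "perm_len n (w \<circ> u) \<le> perm_len n w + perm_len n u"
proof -
  have "word_perm (rw n w @ rw n u) = w \<circ> u"
    using rw_reduced_word[OF assms(1)] rw_reduced_word[OF assms(2)]
    by (simp add: reduced_word_def word_perm_append)
  then show ?thesis
    using perm_len_word_perm_le[of "rw n w @ rw n u" n] rw_set[OF assms(1)] rw_set[OF assms(2)]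
      reduced_word_length[OF rw_reduced_word[OF assms(1)]]
      reduced_word_length[OF rw_reduced_word[OF assms(2)]]
    by simp
qed

lemma rw_id [simp]: "rw n id = []"
  using reduced_word_length[OF rw_reduced_word[OF id_Sn]] by simp

section \<open>Matsumoto's theorem\<close>

lemma reduced_words_first_letters:
  assumes a: "reduced_word n u (i # a)" and b: "reduced_word n u (j # b)" and ij: "i < j"
  obtains c where "Suc i < j" "reduced_word n (sref i \<circ> u) (j # c)" "reduced_word n (sref j \<circ> u) (i # c)"
    | c where "j = Suc i" "reduced_word n (sref i \<circ> u) (Suc i # i # c)"
        "reduced_word n (sref j \<circ> u) (i # Suc i # c)"
proof -
  note A = reduced_word_ConsD[OF a] and B = reduced_word_ConsD[OF b]
  have u: "u \<in> Sn n" using reduced_word_Sn[OF a] .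
  let ?x = "sref i \<circ> u" and ?x' = "sref j \<circ> u"
  have x: "?x \<in> Sn n" and x': "?x' \<in> Sn n" using A B u by (auto intro: sref_comp_Sn)
  note inv_simps = inv_sref_comp bij_sref_comp bij_Sn[OF u] sref_apply
  show ?thesis
  proof (cases "j = Suc i")
    case False
    then have ij2: "Suc i < j" using ij by simp
    obtain c where c: "reduced_word n (sref j \<circ> ?x) c"
      using reduced_word_exists sref_comp_Sn[OF x B(3,4)] by blast
    have "reduced_word n ?x (j # c)"
      using B(2) ij2 by (intro reduced_word_descentI[OF c _ B(3,4) x]) (simp add: inv_simps)
    moreover have "reduced_word n ?x' (i # c)"
      using A(2) ij2 c sref_commute[OF ij2, of u]
      by (intro reduced_word_descentI[OF _ _ A(3,4) x']) (simp_all add: inv_simps)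
    ultimately show ?thesis using that(1) ij2 by blast
  next
    case True
    let ?y = "sref (Suc i) \<circ> ?x" and ?y' = "sref i \<circ> ?x'"
    have y: "?y \<in> Sn n" and y': "?y' \<in> Sn n"
      using sref_comp_Sn[OF x] sref_comp_Sn[OF x'] A(3,4) B(3,4) True by auto
    obtain c where c: "reduced_word n (sref i \<circ> ?y) c"
      using reduced_word_exists sref_comp_Sn[OF y A(3,4)] by blast
    have "reduced_word n ?y (i # c)"
      using A(2) B(2) True
      by (intro reduced_word_descentI[OF c _ A(3,4) y]) (simp add: inv_simps)
    then have "reduced_word n ?x (Suc i # i # c)"
      using A(2) B(2) B(3,4) True
      by (intro reduced_word_descentI[OF _ _ _ _ x]) (simp_all add: inv_simps)
    moreover have "reduced_word n ?y' (Suc i # c)"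
      using A(2) B(2) B(3,4) True c sref_braid[of i u]
      by (intro reduced_word_descentI[OF _ _ _ _ y']) (simp_all add: inv_simps)
    then have "reduced_word n ?x' (i # Suc i # c)"
      using A(2) B(2) True
      by (intro reduced_word_descentI[OF _ _ A(3,4) x']) (simp_all add: inv_simps)
    ultimately show ?thesis using that(2) True by blast
  qed
qed

lemma wact_Nil [simp]: "wact X [] v = v"
  by (simp add: wact_def)

lemma wact_Cons [simp]: "wact X (i # ws) v = X i (wact X ws v)"
  by (simp add: wact_def)

lemma wact_append: "wact X (ws @ ws') v = wact X ws (wact X ws' v)"
  by (simp add: wact_def)

theorem wact_reduced_word_eq:
  fixes X :: "nat \<Rightarrow> 'v \<Rightarrow> 'v"
  assumes commute: "\<And>i j v. 1 \<le> i \<Longrightarrow> Suc i < j \<Longrightarrow> j < n \<Longrightarrow> X i (X j v) = X j (X i v)"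
    and braid: "\<And>i v. 1 \<le> i \<Longrightarrow> Suc i < n \<Longrightarrow>
      X i (X (Suc i) (X i v)) = X (Suc i) (X i (X (Suc i) v))"
  shows "reduced_word n u a \<Longrightarrow> reduced_word n u b \<Longrightarrow> wact X a v = wact X b v"
proof (induction "length a" arbitrary: u a b v rule: less_induct)
  case less
  have IH: "wact X c v = wact X d v"
    if "length c < length a" "reduced_word n x c" "reduced_word n x d" for x c d v
    using less.hyps that by blast
  have different_first_letters: "wact X (i # a') v = wact X (j # b') v"
    if ij: "i < j" and ra: "reduced_word n u (i # a')" and rb: "reduced_word n u (j # b')"
      and short: "length a' < length a" for i j a' b'
  proof -
    note A = reduced_word_ConsD[OF ra] and B = reduced_word_ConsD[OF rb]
    have short': "length b' < length a"
      using reduced_word_length[OF ra] reduced_word_length[OF rb] short by simp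
    from ra rb ij show ?thesis
    proof (cases rule: reduced_words_first_letters)
      case (1 c)
      have "wact X (i # a') v = X i (X j (wact X c v))"
        using IH[OF short A(1) 1(2)] by simp
      also have "\<dots> = X j (X i (wact X c v))"
        by (rule commute[OF A(3) 1(1) B(4)])
      also have "\<dots> = wact X (j # b') v"
        using IH[OF short' B(1) 1(3)] by simp
      finally show ?thesis .
    next
      case (2 c)
      have "wact X (i # a') v = X i (X (Suc i) (X i (wact X c v)))"
        using IH[OF short A(1) 2(2)] by simp
      also have "\<dots> = X (Suc i) (X i (X (Suc i) (wact X c v)))"
        using braid[OF A(3)] B(4) 2(1) by simp
      also have "\<dots> = wact X (j # b') v"
        using IH[OF short' B(1) 2(3)] 2(1) by simp
      finally show ?thesis .
    qed
  qed
  show ?case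
  proof (cases a)
    case Nil
    then show ?thesis using less.prems by (simp add: reduced_word_def)
  next
    case (Cons i a')
    obtain j b' where b: "b = j # b'"
      using less.prems Cons by (cases b) (auto simp: reduced_word_def)
    note ra = less.prems(1)[unfolded Cons] and rb = less.prems(2)[unfolded b]
    have len: "length b' = length a'"
      using reduced_word_length[OF ra] reduced_word_length[OF rb] by simp
    consider "i = j" | "i < j" | "j < i" by linarith
    then show ?thesis
    proof cases
      case 1
      then have "wact X a' v = wact X b' v"
        using IH[of a' "sref i \<circ> u" b' v] reduced_word_ConsD(1)[OF ra] reduced_word_ConsD(1)[OF rb] Cons
        by simp
      then show ?thesis using 1 Cons b by simp
    next
      case 2
      then show ?thesis using different_first_letters[OF 2 ra rb] Cons b by simp
    next
      case 3
      then show ?thesis using different_first_letters[OF 3 rb ra] Cons b len by simp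
    qed
  qed
qed

section \<open>The 0-Hecke algebra\<close>

text \<open>\<open>\<pi>\<^sub>i \<pi>\<^sub>w = \<pi>\<^bsub>hstep i w\<^esub>\<close>; the length test of \<open>gen_basis\<close> becomes a test on the
  positions of \<open>i\<close> and \<open>i + 1\<close> in \<open>w\<close>.\<close>

definition hstep :: "nat \<Rightarrow> perm \<Rightarrow> perm" where
  "hstep i w = (if inv w i < inv w (Suc i) then sref i \<circ> w else w)"

lemma hstep_ascent: "inv w i < inv w (Suc i) \<Longrightarrow> hstep i w = sref i \<circ> w"
  by (simp add: hstep_def)

lemma hstep_Sn: "w \<in> Sn n \<Longrightarrow> 1 \<le> i \<Longrightarrow> i < n \<Longrightarrow> hstep i w \<in> Sn n"
  by (simp add: hstep_def sref_comp_Sn)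

lemma hstep_idem: "bij w \<Longrightarrow> hstep i (hstep i w) = hstep i w"
  by (auto simp: hstep_def inv_sref_comp sref_apply)

lemma hstep_commute: "bij w \<Longrightarrow> Suc i < j \<Longrightarrow> hstep i (hstep j w) = hstep j (hstep i w)"
  by (auto simp: hstep_def inv_sref_comp bij_sref_comp sref_apply sref_commute)

lemma hstep_braid:
  "bij w \<Longrightarrow> hstep i (hstep (Suc i) (hstep i w)) = hstep (Suc i) (hstep i (hstep (Suc i) w))"
  by (auto simp: hstep_def inv_sref_comp bij_sref_comp sref_apply sref_braid)

lemma perm_len_hstep_le:
  "w \<in> Sn n \<Longrightarrow> 1 \<le> i \<Longrightarrow> i < n \<Longrightarrow> perm_len n (hstep i w) \<le> Suc (perm_len n w)"
  by (cases rule: perm_len_sref_cases) (auto simp: hstep_def)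

lemma gen_basis_eq_hstep:
  "w \<in> Sn n \<Longrightarrow> 1 \<le> i \<Longrightarrow> i < n \<Longrightarrow> gen_basis n i w = hb (hstep i w)"
  by (cases rule: perm_len_sref_cases) (auto simp: gen_basis_def hstep_def)

lemma hb_sum_left: "finite S \<Longrightarrow> (\<Sum>w'\<in>S. hb w w' * f w') = (if w \<in> S then f w else 0)"
  by (simp add: hb_def if_distrib[of "\<lambda>x. x * _"] cong: if_cong)

lemma hgen_eq_sum_hstep:
  assumes "1 \<le> i" "i < n"
  shows "hgen n i x = (\<lambda>u. \<Sum>w\<in>Sn n. x w * hb (hstep i w) u)"
  unfolding hgen_def using assms by (intro ext sum.cong refl) (simp add: gen_basis_eq_hstep)

lemma hgen_hb: "w \<in> Sn n \<Longrightarrow> 1 \<le> i \<Longrightarrow> i < n \<Longrightarrow> hgen n i (hb w) = hb (hstep i w)"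
  by (simp add: hgen_eq_sum_hstep hb_sum_left finite_Sn)

lemma hgen_sum:
  "finite K \<Longrightarrow> hgen n i (\<lambda>u. \<Sum>k\<in>K. c k * f k u) = (\<lambda>u. \<Sum>k\<in>K. c k * hgen n i (f k) u)"
  unfolding hgen_def
  by (auto simp: fun_eq_iff sum_distrib_left sum_distrib_right mult.assoc intro: sum.swap)

lemma hgen_add: "hgen n i (\<lambda>u. x u + y u) = (\<lambda>u. hgen n i x u + hgen n i y u)"
  by (simp add: hgen_def fun_eq_iff distrib_right sum.distrib)

lemma hgen_diff: "hgen n i (\<lambda>u. x u - y u) = (\<lambda>u. hgen n i x u - hgen n i y u)"
  by (simp add: hgen_def fun_eq_iff left_diff_distrib sum_subtractf)

lemma wact_hgen_sum:
  "finite K \<Longrightarrow> wact (hgen n) ws (\<lambda>u. \<Sum>k\<in>K. c k * f k u) =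
    (\<lambda>u. \<Sum>k\<in>K. c k * wact (hgen n) ws (f k) u)"
  by (induction ws) (simp_all add: hgen_sum)

lemma foldr_hstep_Sn: "w \<in> Sn n \<Longrightarrow> set ws \<subseteq> {1..<n} \<Longrightarrow> foldr hstep ws w \<in> Sn n"
  by (induction ws) (auto intro: hstep_Sn)

lemma wact_hgen_hb:
  "w \<in> Sn n \<Longrightarrow> set ws \<subseteq> {1..<n} \<Longrightarrow> wact (hgen n) ws (hb w) = hb (foldr hstep ws w)"
  by (induction ws) (auto simp: hgen_hb foldr_hstep_Sn)

lemma wact_hgen_eq_sum:
  assumes "ws \<noteq> []" "set ws \<subseteq> {1..<n}"
  shows "wact (hgen n) ws x = (\<lambda>u. \<Sum>w\<in>Sn n. x w * hb (foldr hstep ws w) u)"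
proof -
  obtain ws' i where ws: "ws = ws' @ [i]" using assms(1) by (cases ws rule: rev_cases) auto
  have i: "1 \<le> i" "i < n" and ws': "set ws' \<subseteq> {1..<n}" using assms(2) ws by auto
  have "wact (hgen n) ws x = wact (hgen n) ws' (\<lambda>u. \<Sum>w\<in>Sn n. x w * hb (hstep i w) u)"
    by (simp add: ws wact_append hgen_eq_sum_hstep[OF i])
  also have "\<dots> = (\<lambda>u. \<Sum>w\<in>Sn n. x w * hb (foldr hstep ws' (hstep i w)) u)"
    by (simp add: wact_hgen_sum finite_Sn wact_hgen_hb[OF hstep_Sn[OF _ i] ws'])
  finally show ?thesis by (simp add: ws)
qed

lemma wact_hgen_cong:
  assumes "as \<noteq> []" "bs \<noteq> []" "set as \<subseteq> {1..<n}" "set bs \<subseteq> {1..<n}"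
    and "\<And>w. bij w \<Longrightarrow> foldr hstep as w = foldr hstep bs w"
  shows "wact (hgen n) as x = wact (hgen n) bs x"
  using assms by (simp add: wact_hgen_eq_sum bij_Sn)

lemma hgen_idem:
  assumes "1 \<le> i" "i < n"
  shows "hgen n i (hgen n i x) = hgen n i x"
proof -
  have "wact (hgen n) [i, i] x = wact (hgen n) [i] x"
    using assms by (intro wact_hgen_cong) (auto simp: hstep_idem)
  then show ?thesis by simp
qed

lemma hgen_commute:
  assumes "1 \<le> i" "Suc i < j" "j < n"
  shows "hgen n i (hgen n j x) = hgen n j (hgen n i x)"
proof -
  have "wact (hgen n) [i, j] x = wact (hgen n) [j, i] x"
    using assms by (intro wact_hgen_cong) (auto intro: hstep_commute)
  then show ?thesis by simp
qed

lemma hgen_braid: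
  assumes "1 \<le> i" "Suc i < n"
  shows "hgen n i (hgen n (Suc i) (hgen n i x)) = hgen n (Suc i) (hgen n i (hgen n (Suc i) x))"
proof -
  have "wact (hgen n) [i, Suc i, i] x = wact (hgen n) [Suc i, i, Suc i] x"
    using assms by (intro wact_hgen_cong) (auto simp: hstep_braid)
  then show ?thesis by simp
qed

lemma bar_apply: "bar g i v = (\<lambda>u. g i v u - v u)"
  by (simp add: bar_def)

lemma bar_commute:
  assumes "1 \<le> i" "Suc i < j" "j < n"
  shows "bar (hgen n) i (bar (hgen n) j x) = bar (hgen n) j (bar (hgen n) i x)"
  by (simp add: bar_apply hgen_diff hgen_commute[OF assms] algebra_simps)

lemma bar_braid:
  assumes "1 \<le> i" "Suc i < n"
  shows "bar (hgen n) i (bar (hgen n) (Suc i) (bar (hgen n) i x)) =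
    bar (hgen n) (Suc i) (bar (hgen n) i (bar (hgen n) (Suc i) x))"
proof -
  have "1 \<le> Suc i" "i < n" using assms by auto
  then show ?thesis
    using assms by (simp add: bar_apply hgen_diff hgen_add hgen_idem hgen_braid algebra_simps)
qed

lemma hgen_bar: "1 \<le> i \<Longrightarrow> i < n \<Longrightarrow> hgen n i (bar (hgen n) i y) = (\<lambda>u. 0)"
  by (simp add: bar_apply hgen_diff hgen_idem)

lemma wact_bar_zero: "wact (bar (hgen n)) ws (\<lambda>u. 0) = (\<lambda>u. 0)"
  by (induction ws) (simp_all add: bar_apply hgen_def)

lemma wact_hgen_reduced_word:
  "reduced_word n u ws \<Longrightarrow> wact (hgen n) ws x = wact (hgen n) (rw n u) x"
  by (rule wact_reduced_word_eq[where n = n])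
    (auto intro: hgen_commute hgen_braid rw_reduced_word reduced_word_Sn)

lemma wact_bar_reduced_word:
  "reduced_word n u ws \<Longrightarrow> wact (bar (hgen n)) ws x = wact (bar (hgen n)) (rw n u) x"
  by (rule wact_reduced_word_eq[where n = n])
    (auto intro: bar_commute bar_braid rw_reduced_word reduced_word_Sn)

lemma foldr_hstep_reduced_word: "reduced_word n u ws \<Longrightarrow> foldr hstep ws id = u"
proof (induction ws arbitrary: u)
  case Nil
  then show ?case by (simp add: reduced_word_def)
next
  case (Cons i ws)
  note A = reduced_word_ConsD[OF Cons.prems]
  have asc: "inv (sref i \<circ> u) i < inv (sref i \<circ> u) (Suc i)"
    using A(2) by (simp add: inv_sref_comp bij_Sn[OF reduced_word_Sn[OF Cons.prems]] sref_apply)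
  have "foldr hstep (i # ws) id = hstep i (foldr hstep ws id)"
    by simp
  also have "\<dots> = hstep i (sref i \<circ> u)"
    using Cons.IH[OF A(1)] by (rule arg_cong)
  also have "\<dots> = u"
    by (simp only: hstep_ascent[OF asc] sref_comp_sref)
  finally show ?case .
qed

lemma pi_w_eq_hb: "u \<in> Sn n \<Longrightarrow> pi_w n u = hb u"
  unfolding pi_w_def
  by (simp add: wact_hgen_hb[OF id_Sn rw_set] foldr_hstep_reduced_word[OF rw_reduced_word])

lemma wact_hgen_rw_hstep:
  assumes w: "w \<in> Sn n" and i: "1 \<le> i" "i < n"
  shows "wact (hgen n) (rw n (hstep i w)) y = hgen n i (wact (hgen n) (rw n w) y)"
proof (cases "inv w i < inv w (Suc i)")
  case True
  then show ?thesis
    using wact_hgen_reduced_word[OF reduced_word_ascentI[OF rw_reduced_word[OF w] i True], of y]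
    by (simp add: hstep_def)
next
  case False
  then have desc: "inv w (Suc i) < inv w i" using inv_Sn_neq[OF w, of i "Suc i"] by auto
  let ?w' = "sref i \<circ> w"
  have "reduced_word n w (i # rw n ?w')"
    using reduced_word_descentI[OF rw_reduced_word[OF sref_comp_Sn[OF w i]] desc i w] .
  then have "wact (hgen n) (rw n w) y = hgen n i (wact (hgen n) (rw n ?w') y)"
    using wact_hgen_reduced_word by (metis wact_Cons)
  then show ?thesis using False i by (simp add: hstep_def hgen_idem)
qed

lemma hmul_hgen:
  assumes i: "1 \<le> i" "i < n"
  shows "hmul n (hgen n i x) y = hgen n i (hmul n x y)"
proof -
  have "hmul n (hgen n i x) y =
      (\<lambda>u. \<Sum>w'\<in>Sn n. (\<Sum>w\<in>Sn n. x w * hb (hstep i w) w') * wact (hgen n) (rw n w') y u)"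
    by (simp add: hmul_def hact_def hgen_eq_sum_hstep[OF i])
  also have "\<dots> = (\<lambda>u. \<Sum>w\<in>Sn n. x w * (\<Sum>w'\<in>Sn n. hb (hstep i w) w' * wact (hgen n) (rw n w') y u))"
    by (auto simp: fun_eq_iff sum_distrib_right sum_distrib_left mult.assoc intro: sum.swap)
  also have "\<dots> = (\<lambda>u. \<Sum>w\<in>Sn n. x w * hgen n i (wact (hgen n) (rw n w) y) u)"
    using i by (intro ext sum.cong refl)
      (simp add: hb_sum_left finite_Sn hstep_Sn wact_hgen_rw_hstep)
  also have "\<dots> = hgen n i (hmul n x y)"
    by (simp add: hmul_def hact_def hgen_sum[OF finite_Sn])
  finally show ?thesis .
qed

lemma hmul_diff_left: "hmul n (\<lambda>u. x u - x' u) y = (\<lambda>u. hmul n x y u - hmul n x' y u)"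
  by (simp add: hmul_def hact_def left_diff_distrib sum_subtractf)

lemma hmul_sum_left:
  "finite K \<Longrightarrow> hmul n (\<lambda>u. \<Sum>k\<in>K. c k * f k u) y = (\<lambda>u. \<Sum>k\<in>K. c k * hmul n (f k) y u)"
  by (auto simp: hmul_def hact_def fun_eq_iff sum_distrib_right sum_distrib_left mult.assoc
      intro: sum.swap)

lemma hmul_bar: "1 \<le> i \<Longrightarrow> i < n \<Longrightarrow> hmul n (bar (hgen n) i x) y = bar (hgen n) i (hmul n x y)"
  by (simp add: bar_apply hmul_diff_left hmul_hgen)

lemma hmul_hb_id: "hmul n (hb id) y = y"
  by (simp add: hmul_def hact_def hb_sum_left finite_Sn)

lemma hmul_pibar_w:
  assumes "w \<in> Sn n"
  shows "hmul n (pibar_w n w) y = wact (bar (hgen n)) (rw n w) y"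
proof -
  have "set ws \<subseteq> {1..<n} \<Longrightarrow> hmul n (wact (bar (hgen n)) ws (hb id)) y = wact (bar (hgen n)) ws y"
    for ws by (induction ws) (auto simp: hmul_hb_id hmul_bar)
  from this[OF rw_set[OF assms]] show ?thesis by (simp add: pibar_w_def)
qed

lemma hgen_Hn:
  assumes "1 \<le> i" "i < n"
  shows "hgen n i x \<in> Hn n"
  unfolding Hn_def hgen_eq_sum_hstep[OF assms] hb_def
  using hstep_Sn[OF _ assms] by (auto intro!: sum.neutral)

lemma bar_Hn: "x \<in> Hn n \<Longrightarrow> 1 \<le> i \<Longrightarrow> i < n \<Longrightarrow> bar (hgen n) i x \<in> Hn n"
  using hgen_Hn[of i n x] by (simp add: bar_apply Hn_def)

lemma sum_Hn: "(\<And>k. k \<in> K \<Longrightarrow> f k \<in> Hn n) \<Longrightarrow> (\<lambda>u. \<Sum>k\<in>K. c k * f k u) \<in> Hn n"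
  by (simp add: Hn_def)

lemma pibar_w_Hn:
  assumes "w \<in> Sn n"
  shows "pibar_w n w \<in> Hn n"
proof -
  have "hb id \<in> Hn n" by (simp add: Hn_def hb_def)
  then have "set ws \<subseteq> {1..<n} \<Longrightarrow> wact (bar (hgen n)) ws (hb id) \<in> Hn n" for ws
    by (induction ws) (auto intro: bar_Hn)
  from this[OF rw_set[OF assms]] show ?thesis by (simp add: pibar_w_def)
qed

section \<open>Blocks of a descent set\<close>

text \<open>A set \<open>D \<subseteq> {1..<n}\<close> cuts \<open>[n]\<close> into the blocks \<open>{d + 1..d'}\<close> between consecutive elements
  of \<open>D \<union> {0, n}\<close>; \<open>block_lo D p\<close> and \<open>block_hi D n p\<close> are the two ends \<open>d\<close> and \<open>d'\<close> of the block
  of \<open>p\<close>, and \<open>block_rev D n\<close> reverses every block.\<close>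

definition same_block :: "nat set \<Rightarrow> nat \<Rightarrow> nat \<Rightarrow> bool" where
  "same_block D p q \<longleftrightarrow> (\<forall>d\<in>D. d < p \<longleftrightarrow> d < q)"

definition block_index :: "nat set \<Rightarrow> nat \<Rightarrow> nat" where
  "block_index D p = card {d\<in>D. d < p}"

definition block_lo :: "nat set \<Rightarrow> nat \<Rightarrow> nat" where
  "block_lo D p = Max (insert 0 {d\<in>D. d < p})"

definition block_hi :: "nat set \<Rightarrow> nat \<Rightarrow> nat \<Rightarrow> nat" where
  "block_hi D n p = Min (insert n {d\<in>D. p \<le> d})"

definition block_rev :: "nat set \<Rightarrow> nat \<Rightarrow> perm" where
  "block_rev D n p = (if 1 \<le> p \<and> p \<le> n then block_lo D p + block_hi D n p + 1 - p else p)"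

definition block_pairs :: "nat set \<Rightarrow> nat \<Rightarrow> (nat \<times> nat) set" where
  "block_pairs D n = {(p, q). 1 \<le> p \<and> p < q \<and> q \<le> n \<and> same_block D p q}"

lemma same_block_refl [simp]: "same_block D p p"
  by (simp add: same_block_def)

lemma same_block_sym: "same_block D p q \<Longrightarrow> same_block D q p"
  by (simp add: same_block_def)

lemma same_block_trans: "same_block D p q \<Longrightarrow> same_block D q r \<Longrightarrow> same_block D p r"
  by (simp add: same_block_def)

lemma same_block_between: "same_block D p q \<Longrightarrow> p \<le> r \<Longrightarrow> r \<le> q \<Longrightarrow> same_block D p r"
  unfolding same_block_def by (meson le_less_trans less_le_trans)

lemma not_same_block: "p < q \<Longrightarrow> \<not> same_block D p q \<Longrightarrow> \<exists>d\<in>D. p \<le> d \<and> d < q"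
  unfolding same_block_def by (meson leI less_trans)

lemma same_block_inner: "same_block D p q \<Longrightarrow> p \<le> r \<Longrightarrow> r < q \<Longrightarrow> r \<notin> D"
  unfolding same_block_def by auto

lemma same_block_Suc_iff: "same_block D r (Suc r) \<longleftrightarrow> r \<notin> D"
  unfolding same_block_def by (auto simp: less_Suc_eq)

lemma same_block_iff_block_index_eq:
  assumes "finite D"
  shows "same_block D p q \<longleftrightarrow> block_index D p = block_index D q"
proof -
  have card_eq_iff: "card {d\<in>D. d < x} = card {d\<in>D. d < y} \<longleftrightarrow> {d\<in>D. d < x} = {d\<in>D. d < y}"
    if "x \<le> y" for x y
  proof
    assume "card {d\<in>D. d < x} = card {d\<in>D. d < y}"
    moreover have "{d\<in>D. d < x} \<subseteq> {d\<in>D. d < y}" using that by auto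
    moreover have "finite {d\<in>D. d < y}" using assms by simp
    ultimately show "{d\<in>D. d < x} = {d\<in>D. d < y}"
      by (metis card_subset_eq)
  qed simp
  have "same_block D p q \<longleftrightarrow> {d\<in>D. d < p} = {d\<in>D. d < q}"
    unfolding same_block_def set_eq_iff mem_Collect_eq by blast
  also have "\<dots> \<longleftrightarrow> block_index D p = block_index D q"
  proof (cases "p \<le> q")
    case True
    then show ?thesis using card_eq_iff[OF True] by (simp add: block_index_def)
  next
    case False
    then show ?thesis using card_eq_iff[of q p] unfolding block_index_def by (simp add: eq_commute)
  qed
  finally show ?thesis .
qed

lemma block_index_mono: "finite D \<Longrightarrow> p \<le> q \<Longrightarrow> block_index D p \<le> block_index D q"
  unfolding block_index_def by (intro card_mono) auto

lemma block_index_less_iff: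
  assumes "finite D"
  shows "block_index D p < block_index D q \<longleftrightarrow> p < q \<and> \<not> same_block D p q"
  using block_index_mono[OF assms, of q p] block_index_mono[OF assms, of p q]
    same_block_iff_block_index_eq[OF assms, of p q]
  by linarith

context
  fixes D :: "nat set" and n :: nat
  assumes D: "D \<subseteq> {1..<n}"
begin

lemma finite_D: "finite D"
  using D finite_subset by blast

lemma block_lo_ge: "d \<in> D \<Longrightarrow> d < p \<Longrightarrow> d \<le> block_lo D p"
  unfolding block_lo_def using finite_D by (auto intro: Max_ge)

lemma block_lo_less: "1 \<le> p \<Longrightarrow> block_lo D p < p"
  unfolding block_lo_def using finite_D by (subst Max_less_iff) auto

lemma block_hi_le: "d \<in> D \<Longrightarrow> p \<le> d \<Longrightarrow> block_hi D n p \<le> d"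
  unfolding block_hi_def using finite_D by (auto intro: Min_le)

lemma block_hi_le_n: "block_hi D n p \<le> n"
  unfolding block_hi_def using finite_D by (auto intro: Min_le)

lemma block_hi_ge: "p \<le> n \<Longrightarrow> p \<le> block_hi D n p"
  unfolding block_hi_def using finite_D by (subst Min_ge_iff) auto

lemma same_block_lo: "same_block D p q \<Longrightarrow> block_lo D p = block_lo D q"
  unfolding same_block_def block_lo_def by (metis (lifting))

lemma same_block_hi: "same_block D p q \<Longrightarrow> block_hi D n p = block_hi D n q"
proof -
  assume "same_block D p q"
  then have "{d\<in>D. p \<le> d} = {d\<in>D. q \<le> d}"
    unfolding same_block_def by (auto simp: not_less[symmetric])
  then show ?thesis unfolding block_hi_def by simp
qed

lemma same_block_iff_lo_hi:
  assumes "1 \<le> q" "q \<le> n"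
  shows "same_block D p q \<longleftrightarrow> block_lo D p < q \<and> q \<le> block_hi D n p"
proof
  assume "same_block D p q"
  then show "block_lo D p < q \<and> q \<le> block_hi D n p"
    using same_block_lo same_block_hi block_lo_less[OF assms(1)] block_hi_ge[OF assms(2)] by simp
next
  assume c: "block_lo D p < q \<and> q \<le> block_hi D n p"
  show "same_block D p q" unfolding same_block_def
  proof
    fix d assume d: "d \<in> D"
    show "d < p \<longleftrightarrow> d < q"
    proof
      assume "d < p"
      then show "d < q" using block_lo_ge[OF d \<open>d < p\<close>] c by linarith
    next
      assume dq: "d < q"
      show "d < p"
      proof (rule ccontr)
        assume "\<not> d < p"
        then have "block_hi D n p \<le> d" using block_hi_le[OF d] by simp
        then show False using dq c by simp
      qed
    qed
  qed
qed

lemma block_rev_bounds: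
  "1 \<le> p \<Longrightarrow> p \<le> n \<Longrightarrow> block_lo D p < block_rev D n p \<and> block_rev D n p \<le> block_hi D n p"
  using block_lo_less[of p] block_hi_ge[of p] unfolding block_rev_def by simp arith

lemma block_rev_in_range: "p \<in> {1..n} \<Longrightarrow> block_rev D n p \<in> {1..n}"
  using block_rev_bounds[of p] block_hi_le_n[of p] by auto

lemma same_block_rev: "1 \<le> p \<Longrightarrow> p \<le> n \<Longrightarrow> same_block D p (block_rev D n p)"
  using block_rev_bounds[of p] block_rev_in_range[of p] same_block_iff_lo_hi[of "block_rev D n p" p]
  by auto

lemma block_rev_block_rev [simp]: "block_rev D n (block_rev D n p) = p"
proof (cases "1 \<le> p \<and> p \<le> n")
  case True
  then have s: "same_block D p (block_rev D n p)" and r: "block_rev D n p \<in> {1..n}"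
    using same_block_rev block_rev_in_range by auto
  have "block_rev D n (block_rev D n p) = block_lo D p + block_hi D n p + 1 - block_rev D n p"
    using r same_block_lo[OF s] same_block_hi[OF s] by (simp add: block_rev_def)
  also have "\<dots> = p"
    using block_rev_bounds[of p] True unfolding block_rev_def by simp arith
  finally show ?thesis .
qed (auto simp: block_rev_def)

lemma block_rev_Sn: "block_rev D n \<in> Sn n"
  unfolding Sn_def permutes_def
proof (intro CollectI conjI allI impI)
  fix x assume "x \<notin> {1..n}"
  then show "block_rev D n x = x" by (auto simp: block_rev_def)
next
  fix y
  show "\<exists>!x. block_rev D n x = y"
    by (rule ex1I[of _ "block_rev D n y"]) (auto dest: arg_cong[of _ _ "block_rev D n"])
qed

lemma inv_block_rev: "inv (block_rev D n) = block_rev D n"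
  by (rule inv_equality) simp_all

lemma block_rev_less_same_block:
  "1 \<le> p \<Longrightarrow> p < q \<Longrightarrow> q \<le> n \<Longrightarrow> same_block D p q \<Longrightarrow> block_rev D n q < block_rev D n p"
  using same_block_lo[of p q] same_block_hi[of p q] block_hi_ge[of q] by (auto simp: block_rev_def)

lemma block_rev_less_not_same_block:
  assumes "1 \<le> p" "p < q" "q \<le> n" "\<not> same_block D p q"
  shows "block_rev D n p < block_rev D n q"
proof -
  obtain d where d: "d \<in> D" "p \<le> d" "d < q" using not_same_block[OF assms(2,4)] by blast
  have "block_rev D n p \<le> block_hi D n p" using block_rev_bounds assms by simp
  also have "\<dots> \<le> d" using block_hi_le d by simp
  also have "d \<le> block_lo D q" using block_lo_ge d by simp
  also have "\<dots> < block_rev D n q" using block_rev_bounds assms by simp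
  finally show ?thesis .
qed

lemma inversions_block_rev: "inversions n (block_rev D n) = block_pairs D n"
proof (rule set_eqI, clarify)
  fix p q
  show "(p, q) \<in> inversions n (block_rev D n) \<longleftrightarrow> (p, q) \<in> block_pairs D n"
    using block_rev_less_same_block[of p q] block_rev_less_not_same_block[of p q]
    by (cases "same_block D p q") (auto simp: inversions_def block_pairs_def)
qed

lemma pdes_block_rev: "pdes n (block_rev D n) = {1..<n} - D"
proof (rule set_eqI)
  fix i
  show "i \<in> pdes n (block_rev D n) \<longleftrightarrow> i \<in> {1..<n} - D"
    using block_rev_less_same_block[of i "Suc i"] block_rev_less_not_same_block[of i "Suc i"]
      same_block_Suc_iff[of D i]
    by (cases "1 \<le> i \<and> i < n") (auto simp: pdes_def)
qed

lemma increasing_on_block: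
  assumes u: "u \<in> Sn n" and des: "pdes n u \<subseteq> D"
    and pq: "1 \<le> p" "p < q" "q \<le> n" "same_block D p q"
  shows "u p < u q"
proof (rule lift_Suc_mono_less_ivl[where f = u and N = "{p..<q}"])
  fix r assume r: "r \<in> {p..<q}"
  then have "r \<notin> pdes n u" using same_block_inner[OF pq(4)] des by auto
  then show "u r < u (Suc r)"
    using r pq Sn_eq_iff[OF u, of r "Suc r"] by (auto simp: pdes_def)
qed (use pq in auto)

lemma decreasing_on_block:
  assumes des: "{1..<n} - D \<subseteq> pdes n u"
    and pq: "1 \<le> p" "p < q" "q \<le> n" "same_block D p q"
  shows "u q < u p"
proof -
  have "- int (u p) < - int (u q)"
  proof (rule lift_Suc_mono_less_ivl[where f = "\<lambda>r. - int (u r)" and N = "{p..<q}"])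
    fix r assume r: "r \<in> {p..<q}"
    then have "r \<in> pdes n u" using same_block_inner[OF pq(4)] des pq by auto
    then show "- int (u r) < - int (u (Suc r))" by (simp add: pdes_def)
  qed (use pq in auto)
  then show ?thesis by simp
qed

lemma min_des_perm_eq_block_rev: "min_des_perm n ({1..<n} - D) = block_rev D n"
proof -
  let ?J = "{1..<n} - D"
  let ?P = "\<lambda>w. w \<in> Sn n \<and> pdes n w = ?J \<and> (\<forall>u\<in>Sn n. pdes n u = ?J \<longrightarrow> perm_len n w \<le> perm_len n u)"
  have block_pairs_sub: "block_pairs D n \<subseteq> inversions n u" if "pdes n u = ?J" for u
    using decreasing_on_block that by (auto simp: block_pairs_def inversions_def)
  have finite_block_pairs: "finite (block_pairs D n)"
    using inversions_block_rev finite_inversions by metis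
  have "?P (block_rev D n)"
    using block_rev_Sn pdes_block_rev card_mono[OF finite_inversions block_pairs_sub]
    by (auto simp: perm_len_eq_card_inversions inversions_block_rev)
  then have m: "?P (min_des_perm n ?J)"
    unfolding min_des_perm_def by (rule someI[of ?P])
  then have m_Sn: "min_des_perm n ?J \<in> Sn n" and m_des: "pdes n (min_des_perm n ?J) = ?J"
    and "card (inversions n (min_des_perm n ?J)) \<le> card (block_pairs D n)"
    using block_rev_Sn pdes_block_rev by (auto simp: perm_len_eq_card_inversions inversions_block_rev)
  then have "inversions n (min_des_perm n ?J) = inversions n (block_rev D n)"
    using card_seteq[OF finite_inversions block_pairs_sub[OF m_des]] by (simp add: inversions_block_rev)
  then show ?thesis using Sn_eqI_inversions[OF m_Sn block_rev_Sn] by blast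
qed

end

lemma min_des_perm_empty: "min_des_perm n {} = id"
proof -
  let ?P = "\<lambda>w. w \<in> Sn n \<and> pdes n w = {} \<and> (\<forall>u\<in>Sn n. pdes n u = {} \<longrightarrow> perm_len n w \<le> perm_len n u)"
  have "?P id" by (simp add: pdes_def)
  then have "?P (min_des_perm n {})" unfolding min_des_perm_def by (rule someI[of ?P])
  then have "min_des_perm n {} \<in> Sn n" "perm_len n (min_des_perm n {}) \<le> perm_len n id"
    using \<open>?P id\<close> by auto
  then show ?thesis by (intro perm_len_eq_0_imp_id) simp_all
qed

section \<open>Ordered set partitions and the length of \<open>w \<cdot> w\<^sub>0(\<alpha>\<^sup>c)\<close>\<close>

context
  fixes D :: "nat set" and n :: nat
  assumes D: "D \<subseteq> {1..<n}"
begin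

text \<open>If \<open>Des(w) \<subseteq> D\<close>, the inversions of \<open>w \<cdot> block_rev D n\<close> are those of \<open>block_rev D n\<close> (inside
  a block) together with the images of those of \<open>w\<close> (across blocks), so lengths add.\<close>

lemma perm_len_comp_block_rev:
  assumes w: "w \<in> Sn n" and des: "pdes n w \<subseteq> D"
  shows "perm_len n (w \<circ> block_rev D n) = perm_len n w + perm_len n (block_rev D n)"
proof (rule antisym)
  let ?z = "block_rev D n"
  have z: "?z \<in> Sn n" by (rule block_rev_Sn[OF D])
  then show "perm_len n (w \<circ> ?z) \<le> perm_len n w + perm_len n ?z"
    using perm_len_comp_le[OF w] by blast
  let ?g = "\<lambda>(p, q). (?z p, ?z q)"
  have across: "\<not> same_block D a b" if "(a, b) \<in> inversions n w" for a b
    using that increasing_on_block[OF D w des, of a b] by (auto simp: inversions_def)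
  have z_range: "?z p \<in> {1..n}" if "p \<in> {1..n}" for p
    using block_rev_in_range[OF D that] .
  have z_same_block: "same_block D (?z p) (?z q) \<longleftrightarrow> same_block D p q"
    if "p \<in> {1..n}" "q \<in> {1..n}" for p q
    using that same_block_rev[OF D, of p] same_block_rev[OF D, of q]
    by (meson atLeastAtMost_iff same_block_sym same_block_trans)
  have image_sub: "?g ` inversions n w \<subseteq> inversions n (w \<circ> ?z)"
  proof clarify
    fix a b assume ab: "(a, b) \<in> inversions n w"
    then have "1 \<le> a" "a < b" "b \<le> n" "w b < w a" by (auto simp: inversions_def)
    then show "(?z a, ?z b) \<in> inversions n (w \<circ> ?z)"
      using block_rev_less_not_same_block[OF D _ _ _ across[OF ab]] z_range[of a] z_range[of b]
      by (simp add: inversions_def block_rev_block_rev[OF D])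
  qed
  have block_pairs_sub: "block_pairs D n \<subseteq> inversions n (w \<circ> ?z)"
  proof clarify
    fix p q assume "(p, q) \<in> block_pairs D n"
    then have pq: "1 \<le> p" "p < q" "q \<le> n" "same_block D p q" by (auto simp: block_pairs_def)
    have "w (?z q) < w (?z p)"
      using increasing_on_block[OF D w des _ block_rev_less_same_block[OF D pq]]
        z_range[of p] z_range[of q] z_same_block[of q p] pq same_block_sym
      by fastforce
    then show "(p, q) \<in> inversions n (w \<circ> ?z)" using pq by (simp add: inversions_def)
  qed
  have disjoint: "block_pairs D n \<inter> ?g ` inversions n w = {}"
    using across z_same_block by (fastforce simp: block_pairs_def inversions_def)
  have "inj_on ?g (inversions n w)"
    using Sn_eq_iff[OF z] by (auto simp: inj_on_def)
  then have "perm_len n w + perm_len n ?z = card (?g ` inversions n w) + card (block_pairs D n)"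
    by (simp add: perm_len_eq_card_inversions inversions_block_rev[OF D] card_image)
  also have "\<dots> = card (block_pairs D n \<union> ?g ` inversions n w)"
    using disjoint finite_inversions[of n ?z, unfolded inversions_block_rev[OF D]]
    by (simp add: card_Un_disjoint)
  also have "\<dots> \<le> perm_len n (w \<circ> ?z)"
    unfolding perm_len_eq_card_inversions using image_sub block_pairs_sub by (intro card_mono) auto
  finally show "perm_len n w + perm_len n ?z \<le> perm_len n (w \<circ> ?z)" .
qed

text \<open>Within a block the letters of \<open>w\<close> increase, so \<open>i\<close> and \<open>i + 1\<close> in a common block are
  adjacent.\<close>

lemma same_block_adjacent:
  assumes w: "w \<in> Sn n" and des: "pdes n w \<subseteq> D" and i: "1 \<le> i" "i < n"
    and s: "same_block D (inv w i) (inv w (Suc i))"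
  shows "inv w (Suc i) = Suc (inv w i)"
proof -
  let ?a = "inv w i" and ?b = "inv w (Suc i)"
  have a: "1 \<le> ?a" "?a \<le> n" and b: "1 \<le> ?b" "?b \<le> n"
    using inv_Sn_in_range[OF w, of i] inv_Sn_in_range[OF w, of "Suc i"] i by auto
  have wa: "w ?a = i" and wb: "w ?b = Suc i" using Sn_apply_inv[OF w] by auto
  have "?a \<noteq> ?b" using inv_Sn_neq[OF w, of i "Suc i"] by simp
  moreover have "\<not> ?b < ?a"
    using increasing_on_block[OF D w des b(1) _ a(2) same_block_sym[OF s]] wa wb by auto
  moreover have "\<not> Suc ?a < ?b"
  proof
    assume lt: "Suc ?a < ?b"
    have s1: "same_block D ?a (Suc ?a)" using same_block_between[OF s, of "Suc ?a"] lt by simp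
    have "w ?a < w (Suc ?a)" using increasing_on_block[OF D w des a(1) _ _ s1] lt b by simp
    moreover have "w (Suc ?a) < w ?b"
      using increasing_on_block[OF D w des _ lt b(2) same_block_trans[OF same_block_sym[OF s1] s]] a
      by simp
    ultimately show False using wa wb by simp
  qed
  ultimately show ?thesis by simp
qed

lemma pdes_sref_comp_subset:
  assumes w: "w \<in> Sn n" and des: "pdes n w \<subseteq> D" and i: "1 \<le> i" "i < n"
    and ns: "\<not> same_block D (inv w i) (inv w (Suc i))"
  shows "pdes n (sref i \<circ> w) \<subseteq> D"
proof
  fix r assume "r \<in> pdes n (sref i \<circ> w)"
  then have r: "1 \<le> r" "r < n" and lt: "sref i (w (Suc r)) < sref i (w r)"
    by (auto simp: pdes_def)
  show "r \<in> D"
  proof (cases "w (Suc r) = Suc i \<and> w r = i")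
    case True
    then have "inv w i = r" "inv w (Suc i) = Suc r" using Sn_inv_apply[OF w] by metis+
    then show ?thesis using ns same_block_Suc_iff[of D r] by simp
  next
    case False
    then have "w (Suc r) < w r" using lt sref_less_sref_iff[of i "w (Suc r)" "w r"] by auto
    then show ?thesis using des r by (auto simp: pdes_def)
  qed
qed

end

lemma sref_comp_eq_comp_sref:
  assumes w: "w \<in> Sn n" and adj: "inv w (Suc i) = Suc (inv w i)"
  shows "sref i \<circ> w = w \<circ> sref (inv w i)"
proof
  fix p
  let ?a = "inv w i"
  have wa: "w ?a = i" and wb: "w (Suc ?a) = Suc i" using Sn_apply_inv[OF w] adj by metis+
  show "(sref i \<circ> w) p = (w \<circ> sref ?a) p"
  proof (cases "p = ?a \<or> p = Suc ?a")
    case True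
    then show ?thesis using wa wb by (auto simp: sref_apply)
  next
    case False
    then have "w p \<noteq> i" "w p \<noteq> Suc i" using wa wb Sn_eq_iff[OF w] by metis+
    then show ?thesis using False by (simp add: sref_apply)
  qed
qed

lemma cdes_subset:
  assumes "is_composition n \<alpha>"
  shows "cdes \<alpha> \<subseteq> {1..<n}"
proof
  fix d assume "d \<in> cdes \<alpha>"
  then obtain k where k: "1 \<le> k" "k < length \<alpha>" "d = sum_list (take k \<alpha>)"
    by (auto simp: cdes_def)
  have pos: "\<forall>x\<in>set \<alpha>. 0 < x" and sum: "sum_list \<alpha> = n"
    using assms by (auto simp: is_composition_def)
  have "take k \<alpha> \<noteq> []" "drop k \<alpha> \<noteq> []" using k by auto
  then have "0 < sum_list (take k \<alpha>)" "0 < sum_list (drop k \<alpha>)"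
    using pos by (metis gr0I in_set_takeD last_in_set sum_list_eq_0_iff,
        metis gr0I in_set_dropD last_in_set sum_list_eq_0_iff)
  moreover have "sum_list (take k \<alpha>) + sum_list (drop k \<alpha>) = n"
    using sum by (metis append_take_drop_id sum_list_append)
  ultimately show "d \<in> {1..<n}" unfolding k(3) atLeastLessThan_iff by linarith
qed

lemma w0c_eq_block_rev: "is_composition n \<alpha> \<Longrightarrow> w0c n \<alpha> = block_rev (cdes \<alpha>) n"
  unfolding w0c_def by (rule min_des_perm_eq_block_rev[OF cdes_subset])

lemma w0_single: "w0 n [n] = id"
  by (simp add: w0_def cdes_def min_des_perm_empty)

lemma OP_Sn: "w \<in> OP n \<alpha> \<Longrightarrow> w \<in> Sn n"
  by (simp add: OP_def)

lemma OP_pdes: "w \<in> OP n \<alpha> \<Longrightarrow> pdes n w \<subseteq> cdes \<alpha>"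
  by (simp add: OP_def)

lemma finite_OP: "finite (OP n \<alpha>)"
  using finite_Sn by (simp add: OP_def)

lemma id_OP: "id \<in> OP n \<alpha>"
  by (simp add: OP_def pdes_def)

lemma blk_eq_block_index: "blk \<alpha> w x = block_index (cdes \<alpha>) (inv w x)"
  by (simp add: blk_def block_index_def)

section \<open>The isomorphism\<close>

lemma wact_bar_snoc_descent:
  assumes z: "z \<in> Sn n" and a: "1 \<le> a" "a < n" and desc: "inv z (Suc a) < inv z a"
  shows "wact (bar (hgen n)) (ws @ [a]) (hb z) = (\<lambda>u. 0)"
  using desc by (simp add: wact_append bar_apply hgen_hb[OF z a] hstep_def wact_bar_zero)

definition phi_basis :: "nat \<Rightarrow> nat list \<Rightarrow> perm \<Rightarrow> perm \<Rightarrow> 'a::field" where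
  "phi_basis n \<alpha> w = wact (bar (hgen n)) (rw n w) (hb (block_rev (cdes \<alpha>) n))"

definition phi :: "nat \<Rightarrow> nat list \<Rightarrow> (perm \<Rightarrow> 'a::field) \<Rightarrow> perm \<Rightarrow> 'a" where
  "phi n \<alpha> v = (\<lambda>u. \<Sum>w\<in>OP n \<alpha>. v w * phi_basis n \<alpha> w u)"

lemma hgen_phi_basis_descent:
  assumes w: "w \<in> Sn n" and i: "1 \<le> i" "i < n" and desc: "inv w (Suc i) < inv w i"
  shows "hgen n i (phi_basis n \<alpha> w) = (\<lambda>u. 0)"
proof -
  have "reduced_word n w (i # rw n (sref i \<circ> w))"
    using reduced_word_descentI[OF rw_reduced_word[OF sref_comp_Sn[OF w i]] desc i w] .
  then have eq: "phi_basis n \<alpha> w = bar (hgen n) i (phi_basis n \<alpha> (sref i \<circ> w))"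
    unfolding phi_basis_def by (metis wact_Cons wact_bar_reduced_word)
  show ?thesis by (subst eq) (rule hgen_bar[OF i])
qed

lemma phi_basis_sref_ascent:
  assumes w: "w \<in> Sn n" and i: "1 \<le> i" "i < n" and asc: "inv w i < inv w (Suc i)"
  shows "phi_basis n \<alpha> (sref i \<circ> w) = bar (hgen n) i (phi_basis n \<alpha> w)"
  using wact_bar_reduced_word[OF reduced_word_ascentI[OF rw_reduced_word[OF w] i asc]]
  unfolding phi_basis_def by (metis wact_Cons)

lemma hb_id_FOP: "hb id \<in> FOP n \<alpha>"
  by (simp add: FOP_def hb_def id_OP)

lemma pibar_combination_Hn: "(\<lambda>u. \<Sum>w\<in>OP n \<alpha>. v w * pibar_w n w u) \<in> Hn n"
  by (intro sum_Hn pibar_w_Hn OP_Sn)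

lemma hb_sum_two:
  "finite S \<Longrightarrow> a \<in> S \<Longrightarrow> b \<in> S \<Longrightarrow> a \<noteq> b \<Longrightarrow>
    (\<Sum>w'\<in>S. (hb a w' + hb b w') * f w') = f a + f b"
  by (simp add: distrib_right sum.distrib hb_sum_left)

definition supported_below :: "nat \<Rightarrow> nat \<Rightarrow> (perm \<Rightarrow> 'a::field) \<Rightarrow> bool" where
  "supported_below n m f \<longleftrightarrow> (\<forall>y. f y \<noteq> 0 \<longrightarrow> perm_len n y < m)"

lemma supported_below_diff:
  "supported_below n m f \<Longrightarrow> supported_below n m g \<Longrightarrow> supported_below n m (\<lambda>x. f x - g x)"
  unfolding supported_below_def by (metis diff_self)

lemma supported_below_mono: "supported_below n m f \<Longrightarrow> m \<le> m' \<Longrightarrow> supported_below n m' f"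
  by (auto simp: supported_below_def)

lemma supported_below_hb: "supported_below n m (hb t) \<longleftrightarrow> perm_len n t < m"
  by (auto simp: supported_below_def hb_def)

lemma hgen_supported_below:
  assumes i: "1 \<le> i" "i < n" and f: "supported_below n m f"
  shows "supported_below n (Suc m) (hgen n i f)"
  unfolding supported_below_def
proof (intro allI impI)
  fix y assume "hgen n i f y \<noteq> 0"
  then obtain w where w: "w \<in> Sn n" "f w * hb (hstep i w) y \<noteq> 0"
    unfolding hgen_eq_sum_hstep[OF i] by (meson sum.not_neutral_contains_not_neutral)
  then have "f w \<noteq> 0" "hstep i w = y" by (auto simp: hb_def split: if_splits)
  then show "perm_len n y < Suc m"
    using f perm_len_hstep_le[OF w(1) i] by (fastforce simp: supported_below_def)
qed

lemma perm_len_foldr_hstep_le: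
  "u \<in> Sn n \<Longrightarrow> set ws \<subseteq> {1..<n} \<Longrightarrow> perm_len n (foldr hstep ws u) \<le> length ws + perm_len n u"
proof (induction ws)
  case (Cons i ws)
  then show ?case
    using perm_len_hstep_le[OF foldr_hstep_Sn[OF Cons.prems(1)], of ws i] by fastforce
qed simp

text \<open>Expanding \<open>\<pi>\<^bsub>i\<^esub> - 1\<close> letter by letter, \<open>\<pi>\<^bsub>ws\<^esub>\<close> is the only term of top length.\<close>

lemma wact_bar_hb_leading_term:
  assumes u: "u \<in> Sn n"
  shows "set ws \<subseteq> {1..<n} \<Longrightarrow> supported_below n (length ws + perm_len n u)
    (\<lambda>x. wact (bar (hgen n)) ws (hb u) x - hb (foldr hstep ws u) x)"
proof (induction ws)
  case Nil
  then show ?case by (simp add: supported_below_def)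
next
  case (Cons i ws)
  let ?A = "wact (bar (hgen n)) ws (hb u :: perm \<Rightarrow> 'a)" and ?t = "foldr hstep ws u"
  let ?r = "\<lambda>x. ?A x - hb ?t x" and ?m = "length ws + perm_len n u"
  have i: "1 \<le> i" "i < n" and ws: "set ws \<subseteq> {1..<n}" and r: "supported_below n ?m ?r"
    using Cons by auto
  have t: "?t \<in> Sn n" using foldr_hstep_Sn[OF u] Cons.prems by simp
  have "(\<lambda>x. wact (bar (hgen n)) (i # ws) (hb u) x - hb (foldr hstep (i # ws) u) x) =
      (\<lambda>x. hgen n i ?r x - ?r x - hb ?t x)"
    by (simp add: bar_apply hgen_diff hgen_hb[OF t i] algebra_simps)
  moreover have "supported_below n (Suc ?m) (\<lambda>x. hgen n i ?r x - ?r x)"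
    by (rule supported_below_diff[OF hgen_supported_below[OF i r] supported_below_mono[OF r]]) simp
  then have "supported_below n (Suc ?m) (\<lambda>x. hgen n i ?r x - ?r x - hb ?t x)"
    by (rule supported_below_diff)
      (use perm_len_foldr_hstep_le[OF u ws] in \<open>simp add: supported_below_hb\<close>)
  ultimately show ?case by simp
qed

context
  fixes n :: nat and \<alpha> :: "nat list"
  assumes comp: "is_composition n \<alpha>"
begin

lemma cdes_sub: "cdes \<alpha> \<subseteq> {1..<n}"
  using cdes_subset[OF comp] .

lemma hmul_pibar_w_pi_w0c:
  "w \<in> Sn n \<Longrightarrow> hmul n (pibar_w n w) (pi_w n (w0c n \<alpha>)) = phi_basis n \<alpha> w"
  by (simp add: hmul_pibar_w phi_basis_def w0c_eq_block_rev[OF comp] pi_w_eq_hb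
      block_rev_Sn[OF cdes_sub])

text \<open>Here \<open>s\<^sub>i w = w s\<^sub>a\<close> with \<open>a, a + 1\<close> in a common block, so \<open>\<pi>'\<^sub>i \<pi>'\<^sub>w = \<pi>'\<^sub>w \<pi>'\<^sub>a\<close>, and
  \<open>\<pi>'\<^sub>a\<close> kills \<open>\<pi>\<^bsub>w\<^sub>0(\<alpha>\<^sup>c)\<^esub>\<close> because \<open>a\<close> is a left descent of \<open>w\<^sub>0(\<alpha>\<^sup>c)\<close>.\<close>

lemma bar_phi_basis_same_block:
  assumes w: "w \<in> OP n \<alpha>" and i: "1 \<le> i" "i < n"
    and s: "same_block (cdes \<alpha>) (inv w i) (inv w (Suc i))"
  shows "bar (hgen n) i (phi_basis n \<alpha> w) = (\<lambda>u. 0)"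
proof -
  let ?D = "cdes \<alpha>" and ?z = "block_rev (cdes \<alpha>) n" and ?a = "inv w i"
  have wS: "w \<in> Sn n" and des: "pdes n w \<subseteq> ?D" using w by (auto simp: OP_def)
  have adj: "inv w (Suc i) = Suc ?a" using same_block_adjacent[OF cdes_sub wS des i s] .
  have a: "1 \<le> ?a" "Suc ?a \<le> n"
    using inv_Sn_in_range[OF wS, of i] inv_Sn_in_range[OF wS, of "Suc i"] i adj by auto
  have asc: "inv w i < inv w (Suc i)" using adj by simp
  have r1: "reduced_word n (sref i \<circ> w) (i # rw n w)"
    using reduced_word_ascentI[OF rw_reduced_word[OF wS] i asc] .
  have "reduced_word n (sref i \<circ> w) (rw n w @ [?a])"
    using rw_reduced_word[OF wS] a perm_len_sref_ascent[OF wS i asc] sref_comp_eq_comp_sref[OF wS adj]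
    by (auto simp: reduced_word_def word_perm_append)
  then have "bar (hgen n) i (phi_basis n \<alpha> w) = wact (bar (hgen n)) (rw n w @ [?a]) (hb ?z)"
    using wact_bar_reduced_word[OF r1] unfolding phi_basis_def by (metis wact_Cons wact_bar_reduced_word)
  also have "\<dots> = (\<lambda>u. 0)"
    using block_rev_less_same_block[OF cdes_sub a(1) _ a(2)] s adj a
    by (intro wact_bar_snoc_descent[OF block_rev_Sn[OF cdes_sub]])
      (simp_all add: inv_block_rev[OF cdes_sub])
  finally show ?thesis .
qed

lemma hgen_phi_basis:
  assumes w: "w \<in> OP n \<alpha>" and i: "1 \<le> i" "i < n"
  shows "hgen n i (phi_basis n \<alpha> w) = (\<lambda>u. \<Sum>w'\<in>OP n \<alpha>. op_basis \<alpha> i w w' * phi_basis n \<alpha> w' u)"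
proof -
  let ?D = "cdes \<alpha>" and ?a = "inv w i" and ?b = "inv w (Suc i)"
  have wS: "w \<in> Sn n" and des: "pdes n w \<subseteq> ?D" using w by (auto simp: OP_def)
  consider "block_index ?D ?b < block_index ?D ?a" | "block_index ?D ?a < block_index ?D ?b"
    | "block_index ?D ?a = block_index ?D ?b" by linarith
  then show ?thesis
  proof cases
    case 1
    then have "?b < ?a" using block_index_less_iff[OF finite_D[OF cdes_sub]] by blast
    then show ?thesis using hgen_phi_basis_descent[OF wS i] 1 by (simp add: op_basis_def blk_eq_block_index)
  next
    case 2
    then have asc: "?a < ?b" and ns: "\<not> same_block ?D ?a ?b"
      using block_index_less_iff[OF finite_D[OF cdes_sub]] by blast+
    have w2: "sref i \<circ> w \<in> OP n \<alpha>"
      using pdes_sref_comp_subset[OF cdes_sub wS des i ns] sref_comp_Sn[OF wS i] by (simp add: OP_def)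
    have "w \<noteq> sref i \<circ> w" using Sn_apply_inv[OF wS, of i] by (metis comp_apply n_not_Suc_n sref_apply)
    have "(\<lambda>u. \<Sum>w'\<in>OP n \<alpha>. op_basis \<alpha> i w w' * phi_basis n \<alpha> w' u) =
        (\<lambda>u. \<Sum>w'\<in>OP n \<alpha>. (hb w w' + hb (sref i \<circ> w) w') * phi_basis n \<alpha> w' u)"
      using 2 by (simp add: op_basis_def blk_eq_block_index)
    also have "\<dots> = (\<lambda>u. phi_basis n \<alpha> w u + phi_basis n \<alpha> (sref i \<circ> w) u)"
      by (rule ext, rule hb_sum_two[OF finite_OP w w2 \<open>w \<noteq> sref i \<circ> w\<close>])
    also have "\<dots> = hgen n i (phi_basis n \<alpha> w)"
      by (simp add: phi_basis_sref_ascent[OF wS i asc] bar_apply)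
    finally show ?thesis by (rule sym)
  next
    case 3
    then have "same_block ?D ?a ?b"
      using same_block_iff_block_index_eq[OF finite_D[OF cdes_sub]] by blast
    then have "hgen n i (phi_basis n \<alpha> w) = phi_basis n \<alpha> w"
      using bar_phi_basis_same_block[OF w i] by (simp add: bar_apply fun_eq_iff)
    then show ?thesis
      using 3 w by (simp add: op_basis_def blk_eq_block_index hb_sum_left finite_OP)
  qed
qed

lemma phi_opgen: "1 \<le> i \<Longrightarrow> i < n \<Longrightarrow> phi n \<alpha> (opgen n \<alpha> i v) = hgen n i (phi n \<alpha> v)"
proof -
  assume i: "1 \<le> i" "i < n"
  have "phi n \<alpha> (opgen n \<alpha> i v) =
      (\<lambda>u. \<Sum>w\<in>OP n \<alpha>. v w * (\<Sum>w'\<in>OP n \<alpha>. op_basis \<alpha> i w w' * phi_basis n \<alpha> w' u))"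
    by (auto simp: phi_def opgen_def fun_eq_iff sum_distrib_right sum_distrib_left mult.assoc
        intro: sum.swap)
  also have "\<dots> = (\<lambda>u. \<Sum>w\<in>OP n \<alpha>. v w * hgen n i (phi_basis n \<alpha> w) u)"
    by (simp add: hgen_phi_basis[OF _ i])
  finally show ?thesis by (simp add: phi_def hgen_sum[OF finite_OP])
qed

lemma phi_hact: "phi n \<alpha> (hact n (opgen n \<alpha>) h v) = hmul n h (phi n \<alpha> v)"
proof -
  have wact: "set ws \<subseteq> {1..<n} \<Longrightarrow> phi n \<alpha> (wact (opgen n \<alpha>) ws v) = wact (hgen n) ws (phi n \<alpha> v)"
    for ws by (induction ws) (simp_all add: phi_opgen)
  have "phi n \<alpha> (hact n (opgen n \<alpha>) h v) =
      (\<lambda>u. \<Sum>w\<in>Sn n. h w * phi n \<alpha> (wact (opgen n \<alpha>) (rw n w) v) u)"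
    by (auto simp: hact_def phi_def fun_eq_iff sum_distrib_right sum_distrib_left mult.assoc
        intro: sum.swap)
  also have "\<dots> = (\<lambda>u. \<Sum>w\<in>Sn n. h w * wact (hgen n) (rw n w) (phi n \<alpha> v) u)"
    by (intro ext sum.cong refl) (simp add: wact[OF rw_set])
  also have "\<dots> = hmul n h (phi n \<alpha> v)"
    by (simp add: hmul_def hact_def)
  finally show ?thesis .
qed

lemma phi_eq_hmul: "phi n \<alpha> v = hmul n (\<lambda>u. \<Sum>w\<in>OP n \<alpha>. v w * pibar_w n w u) (pi_w n (w0c n \<alpha>))"
  by (simp add: hmul_sum_left[OF finite_OP] phi_def hmul_pibar_w_pi_w0c OP_Sn)

lemma phi_hb_id: "phi n \<alpha> (hb id) = pi_w n (w0c n \<alpha>)"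
  by (simp add: phi_def hb_sum_left finite_OP id_OP phi_basis_def w0c_eq_block_rev[OF comp]
      pi_w_eq_hb block_rev_Sn[OF cdes_sub])

lemma opgen_FOP:
  assumes i: "1 \<le> i" "i < n"
  shows "opgen n \<alpha> i v \<in> FOP n \<alpha>"
proof -
  have vanish: "op_basis \<alpha> i w u = 0" if w: "w \<in> OP n \<alpha>" and u: "u \<notin> OP n \<alpha>" for w u
  proof -
    let ?D = "cdes \<alpha>"
    have wS: "w \<in> Sn n" and des: "pdes n w \<subseteq> ?D" using w by (auto simp: OP_def)
    have "sref i \<circ> w \<in> OP n \<alpha>" if "block_index ?D (inv w i) < block_index ?D (inv w (Suc i))"
      using that pdes_sref_comp_subset[OF cdes_sub wS des i] sref_comp_Sn[OF wS i]
        block_index_less_iff[OF finite_D[OF cdes_sub]] by (simp add: OP_def)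
    then show ?thesis using u w by (auto simp: op_basis_def blk_eq_block_index hb_def)
  qed
  then show ?thesis unfolding FOP_def opgen_def by (auto intro!: sum.neutral simp: vanish)
qed

lemma hact_FOP: "v \<in> FOP n \<alpha> \<Longrightarrow> hact n (opgen n \<alpha>) h v \<in> FOP n \<alpha>"
proof -
  assume v: "v \<in> FOP n \<alpha>"
  have "set ws \<subseteq> {1..<n} \<Longrightarrow> wact (opgen n \<alpha>) ws v \<in> FOP n \<alpha>" for ws
    by (induction ws) (auto simp: v opgen_FOP)
  then show ?thesis unfolding hact_def FOP_def using rw_set by simp
qed

lemma phi_basis_top_length:
  assumes w: "w \<in> OP n \<alpha>"
    and y: "perm_len n w + perm_len n (block_rev (cdes \<alpha>) n) \<le> perm_len n y"
  shows "phi_basis n \<alpha> w y = hb (w \<circ> block_rev (cdes \<alpha>) n) y"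
proof -
  let ?z = "block_rev (cdes \<alpha>) n"
  have wS: "w \<in> Sn n" using OP_Sn[OF w] .
  have z: "?z \<in> Sn n" using block_rev_Sn[OF cdes_sub] .
  have "reduced_word n (w \<circ> ?z) (rw n w @ rw n ?z)"
    using rw_reduced_word[OF wS] rw_reduced_word[OF z]
      perm_len_comp_block_rev[OF cdes_sub wS OP_pdes[OF w]]
    by (auto simp: reduced_word_def word_perm_append)
  then have "foldr hstep (rw n w) ?z = w \<circ> ?z"
    using foldr_hstep_reduced_word foldr_hstep_reduced_word[OF rw_reduced_word[OF z]] by fastforce
  then have "supported_below n (perm_len n w + perm_len n ?z) (\<lambda>x. phi_basis n \<alpha> w x - hb (w \<circ> ?z) x)"
    using wact_bar_hb_leading_term[OF z rw_set[OF wS]]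
      reduced_word_length[OF rw_reduced_word[OF wS]]
    by (simp add: phi_basis_def)
  then show ?thesis using y by (auto simp: supported_below_def)
qed

text \<open>The term \<open>w \<cdot> w\<^sub>0(\<alpha>\<^sup>c)\<close> of a basis element of maximal length in the support occurs in no
  other image.\<close>

lemma phi_eq_0_imp_eq_0:
  assumes v: "v \<in> FOP n \<alpha>" and phi0: "phi n \<alpha> v = (\<lambda>u. 0)"
  shows "v = (\<lambda>u. 0)"
proof (rule ccontr)
  assume "v \<noteq> (\<lambda>u. 0)"
  let ?z = "block_rev (cdes \<alpha>) n" and ?S = "{w\<in>OP n \<alpha>. v w \<noteq> 0}"
  have "finite ?S" "?S \<noteq> {}" using finite_OP v \<open>v \<noteq> (\<lambda>u. 0)\<close> by (auto simp: FOP_def fun_eq_iff)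
  then obtain w0 where w0: "w0 \<in> ?S" and max: "\<And>w. w \<in> ?S \<Longrightarrow> perm_len n w \<le> perm_len n w0"
    using Max_in[of "perm_len n ` ?S"] Max_ge[of "perm_len n ` ?S"] by fastforce
  define y where "y = w0 \<circ> ?z"
  have w0OP: "w0 \<in> OP n \<alpha>" using w0 by simp
  have len_y: "perm_len n y = perm_len n w0 + perm_len n ?z"
    unfolding y_def using perm_len_comp_block_rev[OF cdes_sub OP_Sn[OF w0OP] OP_pdes[OF w0OP]] .
  have zz: "?z \<circ> ?z = id"
    using block_rev_block_rev[OF cdes_sub] by (auto simp: fun_eq_iff)
  have other: "v w * phi_basis n \<alpha> w y = 0" if w: "w \<in> OP n \<alpha>" "w \<noteq> w0" for w
  proof (cases "v w = 0")
    case False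
    have "w \<circ> ?z \<noteq> y"
    proof
      assume "w \<circ> ?z = y"
      then have "w \<circ> ?z \<circ> ?z = w0 \<circ> ?z \<circ> ?z" by (simp add: y_def)
      then show False using zz w(2) by (simp add: comp_assoc)
    qed
    moreover have "phi_basis n \<alpha> w y = (hb (w \<circ> ?z) y :: 'a)"
      by (rule phi_basis_top_length[OF w(1)]) (use max[of w] False w(1) len_y in simp)
    ultimately show ?thesis by (simp add: hb_def)
  qed simp
  have top: "phi_basis n \<alpha> w0 y = (hb y y :: 'a)"
    unfolding y_def by (rule phi_basis_top_length[OF w0OP]) (use len_y in \<open>simp add: y_def\<close>)
  have "phi n \<alpha> v y = v w0 * phi_basis n \<alpha> w0 y"
    unfolding phi_def using other by (simp add: sum.remove[OF finite_OP w0OP] sum.neutral)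
  also have "\<dots> = v w0"
    using top by (simp add: hb_def)
  finally have "phi n \<alpha> v y = v w0" .
  moreover have "phi n \<alpha> v y = 0" using phi0 by simp
  ultimately show False using w0 by simp
qed

lemma inj_on_phi: "inj_on (phi n \<alpha>) (FOP n \<alpha>)"
proof (rule inj_onI)
  fix x y :: "perm \<Rightarrow> 'a" assume x: "x \<in> FOP n \<alpha>" and y: "y \<in> FOP n \<alpha>" and eq: "phi n \<alpha> x = phi n \<alpha> y"
  have "phi n \<alpha> (\<lambda>u. x u - y u) = (\<lambda>u. 0)"
    using eq by (simp add: phi_def fun_eq_iff left_diff_distrib sum_subtractf)
  moreover have "(\<lambda>u. x u - y u) \<in> FOP n \<alpha>" using x y by (simp add: FOP_def)
  ultimately have "(\<lambda>u. x u - y u) = (\<lambda>u. 0)" by (rule phi_eq_0_imp_eq_0[rotated])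
  then show "x = y" by (auto simp: fun_eq_iff)
qed

lemma FOP_generated_by_hb_id:
  assumes v: "v \<in> FOP n \<alpha>"
  shows "v = hact n (opgen n \<alpha>) (\<lambda>u. \<Sum>w\<in>OP n \<alpha>. v w * pibar_w n w u) (hb id)"
  by (rule inj_onD[OF inj_on_phi _ v hact_FOP[OF hb_id_FOP]])
    (simp only: phi_hact phi_hb_id phi_eq_hmul[of v])

lemma phi_image: "phi n \<alpha> ` FOP n \<alpha> = {hmul n h (pi_w n (w0c n \<alpha>)) | h. h \<in> Hn n}"
proof
  show "phi n \<alpha> ` FOP n \<alpha> \<subseteq> {hmul n h (pi_w n (w0c n \<alpha>)) | h. h \<in> Hn n}"
    using phi_eq_hmul pibar_combination_Hn by blast
  have "phi n \<alpha> (hact n (opgen n \<alpha>) h (hb id)) = hmul n h (pi_w n (w0c n \<alpha>))" for h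
    by (simp add: phi_hact phi_hb_id)
  then show "{hmul n h (pi_w n (w0c n \<alpha>)) | h. h \<in> Hn n} \<subseteq> phi n \<alpha> ` FOP n \<alpha>"
    using hact_FOP[OF hb_id_FOP] by (blast intro: sym)
qed

end

lemma Pmod_single_part: "Pmod n [n] \<alpha> = {hmul n h (pi_w n (w0c n \<alpha>)) | h. h \<in> Hn n}"
  by (simp add: Pmod_def w0_single pibar_w_def hmul_hb_id)

theorem mainTheorem10:
  fixes n :: nat and \<alpha> :: "nat list"
  assumes "is_composition n \<alpha>"
  defines "\<phi> \<equiv> (\<lambda>v :: perm \<Rightarrow> 'a::field. (\<lambda>u. \<Sum>w\<in>OP n \<alpha>.
              v w * hmul n (pibar_w n w) (pi_w n (w0c n \<alpha>)) u))"
  shows "(\<forall>v\<in>FOP n \<alpha>. \<exists>h\<in>Hn n. v = hact n (opgen n \<alpha>) h (hb id :: perm \<Rightarrow> 'a))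
       \<and> inj_on \<phi> (FOP n \<alpha>)
       \<and> \<phi> ` (FOP n \<alpha>) = Pmod n [n] \<alpha>
       \<and> (Pmod n [n] \<alpha> :: (perm \<Rightarrow> 'a) set) = {hmul n h (pi_w n (w0c n \<alpha>)) | h. h \<in> (Hn n :: (perm \<Rightarrow> 'a) set)}
       \<and> (\<forall>h\<in>Hn n. \<forall>v\<in>FOP n \<alpha>. \<phi> (hact n (opgen n \<alpha>) h v) = hmul n h (\<phi> v))"
proof -
  have \<phi>: "\<phi> = phi n \<alpha>"
    unfolding \<phi>_def phi_def
    by (intro ext sum.cong refl) (simp add: hmul_pibar_w_pi_w0c[OF assms(1)] OP_Sn)
  show ?thesis
    unfolding \<phi> Pmod_single_part
    using FOP_generated_by_hb_id[OF assms(1)] pibar_combination_Hn inj_on_phi[OF assms(1)]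
      phi_image[OF assms(1)] phi_hact[OF assms(1)]
    by blast
qed

end
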